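(* Let $K\subseteq L$ be fields, $x=(x_1,\dots,x_n)$, and $H\in L[x]^m$ such that $e_1,\dots,e_s$ are projective image apices of $H$ over $K$. Write $H'=(H_{s+1},\dots,H_m)$. (i) $a\in L^m$ is an image apex of $H$ over $K$ if and only if $(a_{s+1},\dots,a_m)$ is an image apex of $H'$ over $K$. (ii) If $p\in L^m$ has $p_i\ne0$ for some $i>s$, then $p$ is a projective image apex of $H$ over $K$ if and only if $(p_{s+1},\dots,p_m)$ is a projective image apex of $H'$ over $K$. (iii) $\operatorname{trdeg}_K K(H)=\operatorname{trdeg}_K K(H')+s$.
   Context: $e_i$ is the $i$-th standard basis vector. With $y$ a tuple of indeterminates of the appropriate length and $t$ new: $a$ is an image apex of $G$ over $K$ if for all $f\in K[y]$, $f(G)=0\Rightarrow f((1-t)G+ta)=0$; $p$ is a projective image apex of $G$ over $K$ if $p\ne0$ and $f(G)=0\Rightarrow f(G+tp)=0$ for all $f\in K[y]$. $\operatorname{trdeg}_K K(G)$: transcendence degree over $K$ of the field generated by the components of $G$. *)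

theory Defs
  imports Main "HOL-Library.Poly_Mapping"
begin

text \<open>Multivariate polynomials over a field L (the type 'a), in the countably many
 variables indexed by nat, as finitely supported maps from monomials (exponent vectors)
 to coefficients.\<close>

type_synonym 'a mpoly = "(nat \<Rightarrow>\<^sub>0 nat) \<Rightarrow>\<^sub>0 'a"

definition mconst :: "'a::comm_ring_1 \<Rightarrow> 'a mpoly" where
  "mconst c = Poly_Mapping.single 0 c"

definition mvar :: "nat \<Rightarrow> 'a::comm_ring_1 mpoly" where
  "mvar i = Poly_Mapping.single (Poly_Mapping.single i 1) 1"

definition mvars :: "'a::comm_ring_1 mpoly \<Rightarrow> nat set" where
  "mvars f = (\<Union>\<mu>\<in>Poly_Mapping.keys f. Poly_Mapping.keys (\<mu> :: nat \<Rightarrow>\<^sub>0 nat))"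

definition mcoeffs :: "'a::comm_ring_1 mpoly \<Rightarrow> 'a set" where
  "mcoeffs f = Poly_Mapping.lookup f ` Poly_Mapping.keys f"

definition poly_over :: "'a::comm_ring_1 set \<Rightarrow> nat \<Rightarrow> 'a mpoly set" where
  "poly_over K m = {f. mcoeffs f \<subseteq> K \<and> mvars f \<subseteq> {..<m}}"

definition msubst :: "'a::comm_ring_1 mpoly \<Rightarrow> (nat \<Rightarrow> 'a mpoly) \<Rightarrow> 'a mpoly" where
  "msubst f G = (\<Sum>\<mu>\<in>Poly_Mapping.keys f. mconst (Poly_Mapping.lookup f \<mu>) * (\<Prod>i\<in>Poly_Mapping.keys \<mu>. G i ^ Poly_Mapping.lookup \<mu> i))"

definition subfield :: "'a::field set \<Rightarrow> bool" where
  "subfield K \<longleftrightarrow> 0 \<in> K \<and> 1 \<in> K \<and> (\<forall>a\<in>K. \<forall>b\<in>K. a + b \<in> K \<and> a * b \<in> K)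
     \<and> (\<forall>a\<in>K. - a \<in> K) \<and> (\<forall>a\<in>K. a \<noteq> 0 \<longrightarrow> inverse a \<in> K)"

text \<open>G = (G_0,...,G_{m-1}) with G_i \<in> L[x_0,...,x_{n-1}]; the new indeterminate t is x_n.\<close>
definition poly_tuple :: "nat \<Rightarrow> nat \<Rightarrow> (nat \<Rightarrow> 'a::comm_ring_1 mpoly) \<Rightarrow> bool" where
  "poly_tuple n m G \<longleftrightarrow> (\<forall>i<m. mvars (G i) \<subseteq> {..<n})"

definition image_apex ::
  "'a::field set \<Rightarrow> nat \<Rightarrow> nat \<Rightarrow> (nat \<Rightarrow> 'a mpoly) \<Rightarrow> (nat \<Rightarrow> 'a) \<Rightarrow> bool" where
  "image_apex K n m G a \<longleftrightarrow>
     (\<forall>f \<in> poly_over K m. msubst f G = 0 \<longrightarrow>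
        msubst f (\<lambda>i. (1 - mvar n) * G i + mvar n * mconst (a i)) = 0)"

definition proj_image_apex ::
  "'a::field set \<Rightarrow> nat \<Rightarrow> nat \<Rightarrow> (nat \<Rightarrow> 'a mpoly) \<Rightarrow> (nat \<Rightarrow> 'a) \<Rightarrow> bool" where
  "proj_image_apex K n m G p \<longleftrightarrow> (\<exists>i<m. p i \<noteq> 0) \<and>
     (\<forall>f \<in> poly_over K m. msubst f G = 0 \<longrightarrow>
        msubst f (\<lambda>i. G i + mvar n * mconst (p i)) = 0)"

definition gen_alg :: "'a::field set \<Rightarrow> nat \<Rightarrow> (nat \<Rightarrow> 'a mpoly) \<Rightarrow> 'a mpoly set" where
  "gen_alg K m G = {msubst f G | f. f \<in> poly_over K m}"

definition alg_indep :: "'a::field set \<Rightarrow> nat \<Rightarrow> (nat \<Rightarrow> 'a mpoly) \<Rightarrow> bool" where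
  "alg_indep K k u \<longleftrightarrow> (\<forall>f \<in> poly_over K k. msubst f u = 0 \<longrightarrow> f = 0)"

text \<open>trdeg_K K(G): maximal number of elements of K[G] (whose fraction field is K(G))
 that are algebraically independent over K.\<close>
definition trdeg :: "'a::field set \<Rightarrow> nat \<Rightarrow> (nat \<Rightarrow> 'a mpoly) \<Rightarrow> nat" where
  "trdeg K m G = Max {k. \<exists>u. (\<forall>i<k. u i \<in> gen_alg K m G) \<and> alg_indep K k u}"

definition unit_vec :: "nat \<Rightarrow> nat \<Rightarrow> 'a::field" where
  "unit_vec j i = (if i = j then 1 else 0)"

end

(*
  Since e_j is a projective image apex of H, a relation f(H) = 0 over K survives replacing H_j by
  the variable t = x_n, which does not occur in H. Expanding f in y_j and comparing coefficients
  of powers of t shows that every coefficient of f with respect to y_j is again a relation of H;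
  iterating over j <= s, the relations of H are exactly the polynomials whose coefficients with
  respect to y_1, ..., y_s are relations of H'. Hence a tuple B satisfies all relations of H iff
  (B_{s+1}, ..., B_m) satisfies all relations of H', which is (i) and (ii).

  For (iii), trdeg_K K(H) is the size of any maximal algebraically independent subfamily of H:
  if every other H_j is algebraic over K[H_J], a dimension count shows that no more than |J|
  elements of K[H] are algebraically independent. By the description of the relations of H, a
  maximal independent subfamily of H' together with H_1, ..., H_s is a maximal independent
  subfamily of H.
*)

theory Submission
  imports Defs "HOL-Library.FuncSet"
begin

lemma mconst_0 [simp]: "mconst 0 = 0"
  by (simp add: mconst_def)

lemma mconst_1 [simp]: "mconst 1 = 1"
  by (simp add: mconst_def)

lemma mconst_add: "mconst (a + b) = mconst a + mconst b"
  by (simp add: mconst_def single_add)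

lemma mconst_mult: "mconst (a * b) = mconst a * mconst b"
  by (simp add: mconst_def mult_single)

lemma mconst_sum: "mconst (sum f A) = (\<Sum>x\<in>A. mconst (f x))"
  by (induction A rule: infinite_finite_induct) (auto simp: mconst_add)

lemma mconst_eq_0_iff [simp]: "mconst a = 0 \<longleftrightarrow> a = 0"
  by (metis mconst_def lookup_single_eq mconst_0)

lemma mconst_mult_single: "mconst c * Poly_Mapping.single \<mu> d = Poly_Mapping.single \<mu> (c * d)"
  by (simp add: mconst_def mult_single)

lemma mvar_power: "mvar i ^ e = Poly_Mapping.single (Poly_Mapping.single i e) 1"
  by (induction e) (auto simp: mvar_def mult_single single_add[symmetric] add.commute)

lemma poly_mapping_sum_single:
  "f = (\<Sum>\<mu>\<in>Poly_Mapping.keys f. Poly_Mapping.single \<mu> (Poly_Mapping.lookup f \<mu>))"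
  by (rule poly_mapping_eqI) (simp add: lookup_sum lookup_single when_def in_keys_iff)

lemma mult_poly_mapping_expand:
  "f * g = (\<Sum>\<mu>\<in>Poly_Mapping.keys f. \<Sum>\<nu>\<in>Poly_Mapping.keys g.
      Poly_Mapping.single (\<mu> + \<nu>) (Poly_Mapping.lookup f \<mu> * Poly_Mapping.lookup g \<nu>))"
proof -
  have "f * g = (\<Sum>\<mu>\<in>Poly_Mapping.keys f. Poly_Mapping.single \<mu> (Poly_Mapping.lookup f \<mu>))
      * (\<Sum>\<nu>\<in>Poly_Mapping.keys g. Poly_Mapping.single \<nu> (Poly_Mapping.lookup g \<nu>))"
    by (simp only: poly_mapping_sum_single[symmetric])
  then show ?thesis by (simp add: sum_product mult_single)
qed

definition monom_subst :: "(nat \<Rightarrow>\<^sub>0 nat) \<Rightarrow> (nat \<Rightarrow> 'a::comm_ring_1 mpoly) \<Rightarrow> 'a mpoly" where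
  "monom_subst \<mu> G = (\<Prod>i\<in>Poly_Mapping.keys \<mu>. G i ^ Poly_Mapping.lookup \<mu> i)"

lemma monom_subst_superset:
  assumes "finite V" "Poly_Mapping.keys \<mu> \<subseteq> V"
  shows "monom_subst \<mu> G = (\<Prod>i\<in>V. G i ^ Poly_Mapping.lookup \<mu> i)"
  unfolding monom_subst_def
  by (rule prod.mono_neutral_left) (use assms in \<open>auto simp: in_keys_iff\<close>)

lemma monom_subst_add: "monom_subst (\<mu> + \<nu>) G = monom_subst \<mu> G * monom_subst \<nu> G"
proof -
  let ?V = "Poly_Mapping.keys \<mu> \<union> Poly_Mapping.keys \<nu>"
  have "monom_subst (\<mu> + \<nu>) G = (\<Prod>i\<in>?V. G i ^ Poly_Mapping.lookup (\<mu> + \<nu>) i)"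
    by (rule monom_subst_superset) (auto simp: keys_add)
  also have "\<dots> = (\<Prod>i\<in>?V. G i ^ Poly_Mapping.lookup \<mu> i) * (\<Prod>i\<in>?V. G i ^ Poly_Mapping.lookup \<nu> i)"
    by (simp add: lookup_add power_add prod.distrib)
  also have "\<dots> = monom_subst \<mu> G * monom_subst \<nu> G"
    by (simp add: monom_subst_superset[symmetric])
  finally show ?thesis .
qed

lemma monom_subst_mvar: "monom_subst \<mu> mvar = Poly_Mapping.single \<mu> 1"
proof -
  have "(\<Prod>i\<in>A. Poly_Mapping.single (\<nu> i) (1::'a::comm_ring_1)) = Poly_Mapping.single (\<Sum>i\<in>A. \<nu> i) 1"
    for A and \<nu> :: "nat \<Rightarrow> nat \<Rightarrow>\<^sub>0 nat"
    by (induction A rule: infinite_finite_induct) (auto simp: mult_single)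
  moreover have "(\<Sum>i\<in>Poly_Mapping.keys \<mu>. Poly_Mapping.single i (Poly_Mapping.lookup \<mu> i)) = \<mu>"
    using poly_mapping_sum_single[of \<mu>] by simp
  ultimately show ?thesis
    by (simp add: monom_subst_def mvar_power)
qed

lemma msubst_superset:
  assumes "finite S" "Poly_Mapping.keys f \<subseteq> S"
  shows "msubst f G = (\<Sum>\<mu>\<in>S. mconst (Poly_Mapping.lookup f \<mu>) * monom_subst \<mu> G)"
  unfolding msubst_def monom_subst_def[symmetric]
  by (rule sum.mono_neutral_left) (use assms in \<open>auto simp: in_keys_iff\<close>)

lemma msubst_0 [simp]: "msubst 0 G = 0"
  by (simp add: msubst_def)

lemma msubst_add: "msubst (f + g) G = msubst f G + msubst g G"
proof -
  let ?S = "Poly_Mapping.keys f \<union> Poly_Mapping.keys g"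
  have "msubst (f + g) G = (\<Sum>\<mu>\<in>?S. mconst (Poly_Mapping.lookup (f + g) \<mu>) * monom_subst \<mu> G)"
    by (rule msubst_superset) (auto simp: keys_add)
  also have "\<dots> = (\<Sum>\<mu>\<in>?S. mconst (Poly_Mapping.lookup f \<mu>) * monom_subst \<mu> G)
      + (\<Sum>\<mu>\<in>?S. mconst (Poly_Mapping.lookup g \<mu>) * monom_subst \<mu> G)"
    by (simp add: lookup_add mconst_add distrib_right sum.distrib)
  also have "\<dots> = msubst f G + msubst g G"
    by (simp add: msubst_superset[symmetric])
  finally show ?thesis .
qed

lemma msubst_single: "msubst (Poly_Mapping.single \<mu> c) G = mconst c * monom_subst \<mu> G"
  by (cases "c = 0") (auto simp: msubst_def monom_subst_def)

lemma msubst_sum: "msubst (sum f A) G = (\<Sum>x\<in>A. msubst (f x) G)"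
  by (induction A rule: infinite_finite_induct) (auto simp: msubst_add)

lemma msubst_mult: "msubst (f * g) G = msubst f G * msubst g G"
proof -
  have "msubst (f * g) G = (\<Sum>\<mu>\<in>Poly_Mapping.keys f. \<Sum>\<nu>\<in>Poly_Mapping.keys g.
      mconst (Poly_Mapping.lookup f \<mu>) * monom_subst \<mu> G * (mconst (Poly_Mapping.lookup g \<nu>) * monom_subst \<nu> G))"
    by (subst mult_poly_mapping_expand) (simp add: msubst_sum msubst_single monom_subst_add mconst_mult mult_ac)
  also have "\<dots> = msubst f G * msubst g G"
    by (simp add: msubst_def monom_subst_def sum_product)
  finally show ?thesis .
qed

lemma msubst_mconst [simp]: "msubst (mconst c) G = mconst c"
  by (simp add: mconst_def msubst_single monom_subst_def)

lemma msubst_mvar [simp]: "msubst (mvar i) G = G i"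
  by (simp add: mvar_def msubst_single monom_subst_def)

lemma msubst_1 [simp]: "msubst 1 G = 1"
  using msubst_mconst[of 1 G] by simp

lemma msubst_prod: "msubst (prod f A) G = (\<Prod>x\<in>A. msubst (f x) G)"
  by (induction A rule: infinite_finite_induct) (auto simp: msubst_mult)

lemma msubst_power: "msubst (f ^ e) G = msubst f G ^ e"
  by (induction e) (auto simp: msubst_mult)

lemma msubst_minus: "msubst (- f) G = - msubst f G"
  using msubst_add[of "- f" f G] by (simp add: eq_neg_iff_add_eq_0)

lemma msubst_compose: "msubst (msubst f G) F = msubst f (\<lambda>i. msubst (G i) F)"
  unfolding msubst_def[of f G]
  by (simp add: msubst_def[of f] msubst_sum msubst_mult msubst_prod msubst_power)

lemma msubst_mvar_id [simp]: "msubst f mvar = f"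
proof -
  have "msubst f mvar = (\<Sum>\<mu>\<in>Poly_Mapping.keys f. Poly_Mapping.single \<mu> (Poly_Mapping.lookup f \<mu>))"
    unfolding msubst_def monom_subst_def[symmetric] by (simp add: monom_subst_mvar mconst_mult_single)
  then show ?thesis using poly_mapping_sum_single[of f] by simp
qed

lemma msubst_cong:
  assumes "\<And>i. i \<in> mvars f \<Longrightarrow> G i = G' i"
  shows "msubst f G = msubst f G'"
  unfolding msubst_def
  by (rule sum.cong[OF refl], rule arg_cong[where f="\<lambda>x. _ * x"], rule prod.cong[OF refl])
     (use assms in \<open>fastforce simp: mvars_def\<close>)

lemma finite_mvars [simp]: "finite (mvars f)"
  by (simp add: mvars_def)

lemma mvars_single: "mvars (Poly_Mapping.single \<mu> c) \<subseteq> Poly_Mapping.keys \<mu>"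
  by (simp add: mvars_def)

lemma mvars_add: "mvars (f + g) \<subseteq> mvars f \<union> mvars g"
  unfolding mvars_def using keys_add[of f g] by auto

lemma mvars_mult: "mvars (f * g) \<subseteq> mvars f \<union> mvars g"
proof
  fix i assume "i \<in> mvars (f * g)"
  then obtain \<mu> where "\<mu> \<in> Poly_Mapping.keys (f * g)" "i \<in> Poly_Mapping.keys \<mu>"
    by (auto simp: mvars_def)
  then obtain a b where "\<mu> = a + b" "a \<in> Poly_Mapping.keys f" "b \<in> Poly_Mapping.keys g"
    using keys_mult[of f g] by auto
  with \<open>i \<in> Poly_Mapping.keys \<mu>\<close> show "i \<in> mvars f \<union> mvars g"
    using keys_add[of a b] by (auto simp: mvars_def)
qed

lemma mvars_0 [simp]: "mvars 0 = {}"
  by (simp add: mvars_def)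

lemma mvars_mconst [simp]: "mvars (mconst c) = {}"
  using mvars_single[of 0 c] by (simp add: mconst_def)

lemma mvars_1 [simp]: "mvars 1 = {}"
  using mvars_mconst[of 1] by simp

lemma mvars_mvar: "mvars (mvar i) \<subseteq> {i}"
  using mvars_single[of "Poly_Mapping.single i 1" 1] by (simp add: mvar_def)

lemma mvars_sum: "mvars (sum f A) \<subseteq> (\<Union>x\<in>A. mvars (f x))"
  by (induction A rule: infinite_finite_induct) (use mvars_add in auto)

lemma mvars_prod: "mvars (prod f A) \<subseteq> (\<Union>x\<in>A. mvars (f x))"
  by (induction A rule: infinite_finite_induct)
(use mvars_mult in auto)

lemma mvars_power: "mvars (f ^ e) \<subseteq> mvars f"
  by (induction e) (use mvars_mult in auto)

lemma mvars_msubst: "mvars (msubst f G) \<subseteq> (\<Union>i\<in>mvars f. mvars (G i))"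
proof -
  have "mvars (msubst f G)
      \<subseteq> (\<Union>\<mu>\<in>Poly_Mapping.keys f. mvars (mconst (Poly_Mapping.lookup f \<mu>) * monom_subst \<mu> G))"
    unfolding msubst_def monom_subst_def[symmetric] by (rule mvars_sum)
  also have "\<dots> \<subseteq> (\<Union>\<mu>\<in>Poly_Mapping.keys f. mvars (monom_subst \<mu> G))"
    using mvars_mult by fastforce
  also have "\<dots> \<subseteq> (\<Union>\<mu>\<in>Poly_Mapping.keys f. \<Union>i\<in>Poly_Mapping.keys \<mu>. mvars (G i))"
    unfolding monom_subst_def using mvars_prod mvars_power by fastforce
  finally show ?thesis by (auto simp: mvars_def)
qed

lemma msubst_eq_self_if_no_mvars:
  assumes "mvars f = {}"
  shows "msubst f G = f"
proof -
  have "Poly_Mapping.keys f \<subseteq> {0}"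
    using assms by (auto simp: mvars_def)
  then have "f = mconst (Poly_Mapping.lookup f 0)"
    by (intro poly_mapping_eqI) (auto simp: mconst_def lookup_single in_keys_iff when_def)
  then show ?thesis
    by (metis msubst_mconst)
qed

definition mrename :: "(nat \<Rightarrow> nat) \<Rightarrow> 'a::comm_ring_1 mpoly \<Rightarrow> 'a mpoly" where
  "mrename \<phi> f = msubst f (\<lambda>i. mvar (\<phi> i))"

lemma msubst_mrename [simp]: "msubst (mrename \<phi> f) G = msubst f (\<lambda>i. G (\<phi> i))"
  by (simp add: mrename_def msubst_compose)

lemma mvars_mrename: "mvars (mrename \<phi> f) \<subseteq> \<phi> ` mvars f"
  using mvars_msubst[of f "\<lambda>i. mvar (\<phi> i)"] mvars_mvar by (fastforce simp: mrename_def)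

lemma mrename_inverse:
  assumes "\<And>i. i \<in> mvars f \<Longrightarrow> \<psi> (\<phi> i) = i"
  shows "mrename \<psi> (mrename \<phi> f) = f"
proof -
  have "mrename \<psi> (mrename \<phi> f) = msubst f (\<lambda>i. mvar (\<psi> (\<phi> i)))"
    by (simp add: mrename_def msubst_compose)
  also have "\<dots> = msubst f mvar"
    by (rule msubst_cong) (simp add: assms)
  finally show ?thesis by simp
qed

lemma subfield_0: "subfield K \<Longrightarrow> 0 \<in> K"
  by (simp add: subfield_def)

lemma subfield_1: "subfield K \<Longrightarrow> 1 \<in> K"
  by (simp add: subfield_def)

lemma subfield_add: "subfield K \<Longrightarrow> a \<in> K \<Longrightarrow> b \<in> K \<Longrightarrow> a + b \<in> K"
  by (simp add: subfield_def)

lemma subfield_mult: "subfield K \<Longrightarrow> a \<in> K \<Longrightarrow> b \<in> K \<Longrightarrow> a * b \<in> K"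
  by (simp add: subfield_def)

lemma subfield_uminus: "subfield K \<Longrightarrow> a \<in> K \<Longrightarrow> - a \<in> K"
  by (simp add: subfield_def)

lemma subfield_diff: "subfield K \<Longrightarrow> a \<in> K \<Longrightarrow> b \<in> K \<Longrightarrow> a - b \<in> K"
  by (metis diff_conv_add_uminus subfield_add subfield_uminus)

lemma subfield_divide: "subfield K \<Longrightarrow> a \<in> K \<Longrightarrow> b \<in> K \<Longrightarrow> a / b \<in> K"
  by (cases "b = 0") (auto simp: subfield_def divide_inverse)

lemma subfield_sum: "subfield K \<Longrightarrow> (\<And>x. x \<in> A \<Longrightarrow> f x \<in> K) \<Longrightarrow> sum f A \<in> K"
  by (induction A rule: infinite_finite_induct) (auto simp: subfield_0 subfield_add)

definition coeffs_in :: "'a::field set \<Rightarrow> 'a mpoly \<Rightarrow> bool" where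
  "coeffs_in K f \<longleftrightarrow> (\<forall>\<mu>. Poly_Mapping.lookup f \<mu> \<in> K)"

lemma poly_over_iff:
  assumes "subfield K"
  shows "f \<in> poly_over K m \<longleftrightarrow> coeffs_in K f \<and> mvars f \<subseteq> {..<m}"
proof -
  have "mcoeffs f \<subseteq> K \<longleftrightarrow> coeffs_in K f"
    unfolding coeffs_in_def mcoeffs_def
    by (metis image_subset_iff in_keys_iff subfield_0[OF assms])
  then show ?thesis by (simp add: poly_over_def)
qed

lemma coeffs_in_single: "subfield K \<Longrightarrow> c \<in> K \<Longrightarrow> coeffs_in K (Poly_Mapping.single \<mu> c)"
  by (simp add: coeffs_in_def lookup_single when_def subfield_0)

lemma coeffs_in_0: "subfield K \<Longrightarrow> coeffs_in K 0"
  by (simp add: coeffs_in_def subfield_0)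

lemma coeffs_in_add: "subfield K \<Longrightarrow> coeffs_in K f \<Longrightarrow> coeffs_in K g \<Longrightarrow> coeffs_in K (f + g)"
  by (simp add: coeffs_in_def lookup_add subfield_add)

lemma coeffs_in_uminus: "subfield K \<Longrightarrow> coeffs_in K f \<Longrightarrow> coeffs_in K (- f)"
  by (simp add: coeffs_in_def subfield_uminus)

lemma coeffs_in_sum:
  "subfield K \<Longrightarrow> (\<And>x. x \<in> A \<Longrightarrow> coeffs_in K (f x)) \<Longrightarrow> coeffs_in K (sum f A)"
  by (induction A rule: infinite_finite_induct) (auto simp: coeffs_in_0 coeffs_in_add)

lemma coeffs_in_mult: "subfield K \<Longrightarrow> coeffs_in K f \<Longrightarrow> coeffs_in K g \<Longrightarrow> coeffs_in K (f * g)"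
  by (subst mult_poly_mapping_expand)
     (intro coeffs_in_sum coeffs_in_single subfield_mult; simp add: coeffs_in_def)

lemma coeffs_in_mconst: "subfield K \<Longrightarrow> c \<in> K \<Longrightarrow> coeffs_in K (mconst c)"
  by (simp add: mconst_def coeffs_in_single)

lemma coeffs_in_mvar: "subfield K \<Longrightarrow> coeffs_in K (mvar i)"
  by (simp add: mvar_def coeffs_in_single subfield_1)

lemma coeffs_in_1: "subfield K \<Longrightarrow> coeffs_in K 1"
  using coeffs_in_mconst[of K 1] by (simp add: subfield_1)

lemma coeffs_in_prod:
  "subfield K \<Longrightarrow> (\<And>x. x \<in> A \<Longrightarrow> coeffs_in K (f x)) \<Longrightarrow> coeffs_in K (prod f A)"
  by (induction A rule: infinite_finite_induct) (auto simp: coeffs_in_1 coeffs_in_mult)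

lemma coeffs_in_power: "subfield K \<Longrightarrow> coeffs_in K f \<Longrightarrow> coeffs_in K (f ^ e)"
  by (induction e) (auto simp: coeffs_in_1 coeffs_in_mult)

lemma coeffs_in_msubst:
  assumes "subfield K" "coeffs_in K f" "\<And>i. i \<in> mvars f \<Longrightarrow> coeffs_in K (G i)"
  shows "coeffs_in K (msubst f G)"
  unfolding msubst_def
  by (intro coeffs_in_sum coeffs_in_mult coeffs_in_mconst coeffs_in_prod coeffs_in_power assms(1))
     (use assms(2,3) in \<open>auto simp: coeffs_in_def mvars_def\<close>)

lemma coeffs_in_mrename: "subfield K \<Longrightarrow> coeffs_in K f \<Longrightarrow> coeffs_in K (mrename \<phi> f)"
  unfolding mrename_def by (intro coeffs_in_msubst coeffs_in_mvar)

lemma poly_over_mrename: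
  assumes "subfield K" "f \<in> poly_over K k" "\<And>i. i \<in> mvars f \<Longrightarrow> \<phi> i < m"
  shows "mrename \<phi> f \<in> poly_over K m"
  using assms mvars_mrename[of \<phi> f] coeffs_in_mrename[OF assms(1)]
  unfolding poly_over_iff[OF assms(1)] by blast

lemma coeffs_in_induct [consumes 3, case_names const var add mult]:
  assumes K: "subfield K" and f: "coeffs_in K f" and V: "mvars f \<subseteq> V"
    and const: "\<And>c. c \<in> K \<Longrightarrow> P (mconst c)"
    and var: "\<And>i. i \<in> V \<Longrightarrow> P (mvar i)"
    and add: "\<And>p q. P p \<Longrightarrow> P q \<Longrightarrow> P (p + q)"
    and mult: "\<And>p q. P p \<Longrightarrow> P q \<Longrightarrow> P (p * q)"
  shows "P f"
proof -
  have P0: "P 0" using const[of 0] subfield_0[OF K] by simp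
  have P1: "P 1" using const[of 1] subfield_1[OF K] by simp
  have Psum: "P (sum g A)" if "\<And>x. x \<in> A \<Longrightarrow> P (g x)" for g and A :: "'b set"
    using that by (induction A rule: infinite_finite_induct) (auto simp: P0 add)
  have Pprod: "P (prod g A)" if "\<And>x. x \<in> A \<Longrightarrow> P (g x)" for g and A :: "'b set"
    using that by (induction A rule: infinite_finite_induct) (auto simp: P1 mult)
  have Ppow: "P (g ^ e)" if "P g" for g e
    using that by (induction e) (auto simp: P1 mult)
  have "P (msubst f mvar)"
    using f V unfolding msubst_def
    by (intro Psum mult const Pprod Ppow var) (auto simp: coeffs_in_def mvars_def)
  then show ?thesis by simp
qed

lemma mpoly_expand_var:
  fixes f :: "'a::field mpoly"
  obtains E fe where "finite E" "f = (\<Sum>e\<in>E. mvar j ^ e * fe e)"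
    "\<And>e. j \<notin> mvars (fe e)" "\<And>e. mvars (fe e) \<subseteq> mvars f"
    "\<And>K e. subfield K \<Longrightarrow> coeffs_in K f \<Longrightarrow> coeffs_in K (fe e)"
proof -
  define E where "E = (\<lambda>\<mu>. Poly_Mapping.lookup \<mu> j) ` Poly_Mapping.keys f"
  define fe where "fe e = (\<Sum>\<mu>\<in>{\<mu>\<in>Poly_Mapping.keys f. Poly_Mapping.lookup \<mu> j = e}.
      Poly_Mapping.single (Poly_Mapping.update j 0 \<mu>) (Poly_Mapping.lookup f \<mu>))" for e
  have split: "Poly_Mapping.single \<mu> c
      = mvar j ^ Poly_Mapping.lookup \<mu> j * Poly_Mapping.single (Poly_Mapping.update j 0 \<mu>) c"
    for \<mu> and c :: 'a
  proof -
    have "Poly_Mapping.single j (Poly_Mapping.lookup \<mu> j) + Poly_Mapping.update j 0 \<mu> = \<mu>"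
      by (rule poly_mapping_eqI) (auto simp: lookup_update lookup_add lookup_single when_def)
    then show ?thesis by (simp add: mvar_power mult_single)
  qed
  have "finite E" by (simp add: E_def)
  moreover have "f = (\<Sum>e\<in>E. mvar j ^ e * fe e)"
  proof -
    have "f = (\<Sum>\<mu>\<in>Poly_Mapping.keys f. mvar j ^ Poly_Mapping.lookup \<mu> j *
        Poly_Mapping.single (Poly_Mapping.update j 0 \<mu>) (Poly_Mapping.lookup f \<mu>))"
      by (subst poly_mapping_sum_single) (simp add: split[symmetric])
    also have "\<dots> = (\<Sum>e\<in>E. \<Sum>\<mu>\<in>{\<mu>\<in>Poly_Mapping.keys f. Poly_Mapping.lookup \<mu> j = e}.
        mvar j ^ Poly_Mapping.lookup \<mu> j *
        Poly_Mapping.single (Poly_Mapping.update j 0 \<mu>) (Poly_Mapping.lookup f \<mu>))"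
      by (rule sum.group[symmetric]) (auto simp: E_def)
    also have "\<dots> = (\<Sum>e\<in>E. mvar j ^ e * fe e)"
      by (rule sum.cong[OF refl]) (simp add: fe_def sum_distrib_left)
    finally show ?thesis .
  qed
  moreover have "j \<notin> mvars (fe e)" "mvars (fe e) \<subseteq> mvars f" for e
  proof -
    have "mvars (fe e) \<subseteq> (\<Union>\<mu>\<in>Poly_Mapping.keys f. Poly_Mapping.keys \<mu> - {j})"
      using mvars_sum mvars_single unfolding fe_def by (fastforce simp: keys_update)
    then show "j \<notin> mvars (fe e)" "mvars (fe e) \<subseteq> mvars f"
      by (auto simp: mvars_def)
  qed
  moreover have "coeffs_in K (fe e)" if "subfield K" "coeffs_in K f" for K e
    unfolding fe_def
    by (intro coeffs_in_sum coeffs_in_single that(1)) (use that in \<open>auto simp: coeffs_in_def\<close>)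
  ultimately show ?thesis using that by blast
qed

lemma msubst_expand_var:
  "f = (\<Sum>e\<in>E. mvar j ^ e * fe e) \<Longrightarrow> msubst f G = (\<Sum>e\<in>E. G j ^ e * msubst (fe e) G)"
  by (simp add: msubst_sum msubst_mult msubst_power)

lemma lookup_mvar_power_mult:
  assumes "N \<notin> mvars q"
  shows "Poly_Mapping.lookup (mvar N ^ e * q) \<nu> =
    (if Poly_Mapping.lookup \<nu> N = e then Poly_Mapping.lookup q (Poly_Mapping.update N 0 \<nu>) else 0)"
proof -
  have key: "Poly_Mapping.single N e + \<mu> = \<nu> \<longleftrightarrow>
      Poly_Mapping.lookup \<nu> N = e \<and> \<mu> = Poly_Mapping.update N 0 \<nu>"
    if "\<mu> \<in> Poly_Mapping.keys q" for \<mu>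
  proof -
    have \<mu>N: "Poly_Mapping.lookup \<mu> N = 0"
      using that assms by (auto simp: mvars_def in_keys_iff)
    show ?thesis
    proof
      assume h: "Poly_Mapping.single N e + \<mu> = \<nu>"
      then have "Poly_Mapping.lookup \<nu> N = e"
        using \<mu>N by (auto simp: lookup_add)
      moreover have "\<mu> = Poly_Mapping.update N 0 \<nu>"
        by (rule poly_mapping_eqI) (use h \<mu>N in \<open>auto simp: lookup_update lookup_add lookup_single\<close>)
      ultimately show "Poly_Mapping.lookup \<nu> N = e \<and> \<mu> = Poly_Mapping.update N 0 \<nu>" by simp
    next
      assume "Poly_Mapping.lookup \<nu> N = e \<and> \<mu> = Poly_Mapping.update N 0 \<nu>"
      then show "Poly_Mapping.single N e + \<mu> = \<nu>"
        by (intro poly_mapping_eqI) (auto simp: lookup_update lookup_add lookup_single when_def)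
    qed
  qed
  have "mvar N ^ e * q = (\<Sum>\<mu>\<in>Poly_Mapping.keys q.
      Poly_Mapping.single (Poly_Mapping.single N e + \<mu>) (Poly_Mapping.lookup q \<mu>))"
    by (subst (1) poly_mapping_sum_single) (simp add: mvar_power sum_distrib_left mult_single)
  then have "Poly_Mapping.lookup (mvar N ^ e * q) \<nu> = (\<Sum>\<mu>\<in>Poly_Mapping.keys q.
      (Poly_Mapping.lookup q \<mu> when Poly_Mapping.single N e + \<mu> = \<nu>))"
    by (simp add: lookup_sum lookup_single)
  also have "\<dots> = (\<Sum>\<mu>\<in>Poly_Mapping.keys q. (Poly_Mapping.lookup q \<mu> when
      Poly_Mapping.lookup \<nu> N = e \<and> \<mu> = Poly_Mapping.update N 0 \<nu>))"
    by (rule sum.cong[OF refl]) (simp add: key)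
  also have "\<dots> = (if Poly_Mapping.lookup \<nu> N = e
      then Poly_Mapping.lookup q (Poly_Mapping.update N 0 \<nu>) else 0)"
    by (auto simp: when_def in_keys_iff)
  finally show ?thesis .
qed

lemma sum_mvar_powers_eq_0D:
  assumes "finite E" "\<And>e. e \<in> E \<Longrightarrow> N \<notin> mvars (q e)"
    and "(\<Sum>e\<in>E. mvar N ^ e * q e) = 0" and "e0 \<in> E"
  shows "q e0 = 0"
proof (rule poly_mapping_eqI)
  fix \<mu>
  show "Poly_Mapping.lookup (q e0) \<mu> = Poly_Mapping.lookup 0 \<mu>"
  proof (cases "Poly_Mapping.lookup \<mu> N = 0")
    case False
    then show ?thesis
      using assms(2)[OF assms(4)] unfolding mvars_def by (metis UN_I in_keys_iff lookup_zero)
  next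
    case True
    define \<nu> where "\<nu> = \<mu> + Poly_Mapping.single N e0"
    have \<nu>N: "Poly_Mapping.lookup \<nu> N = e0"
      using True by (simp add: \<nu>_def lookup_add)
    have \<nu>\<mu>: "Poly_Mapping.update N 0 \<nu> = \<mu>"
      by (rule poly_mapping_eqI) (use True in \<open>auto simp: \<nu>_def lookup_update lookup_add lookup_single when_def\<close>)
    have "0 = Poly_Mapping.lookup (\<Sum>e\<in>E. mvar N ^ e * q e) \<nu>"
      using assms(3) by simp
    also have "\<dots> = (\<Sum>e\<in>E. if e0 = e then Poly_Mapping.lookup (q e) \<mu> else 0)"
      unfolding lookup_sum
      by (rule sum.cong[OF refl]) (simp add: lookup_mvar_power_mult assms(2) \<nu>N \<nu>\<mu>)
    also have "\<dots> = Poly_Mapping.lookup (q e0) \<mu>"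
      using assms(1,4) by simp
    finally show ?thesis by simp
  qed
qed

lemma sum_powers_eq_0_lead_term:
  fixes y :: "'a::comm_ring_1"
  assumes E: "finite E" and zero: "(\<Sum>e\<in>E. y ^ e * a e) = 0" and t: "t \<in> E"
    and above: "\<And>e. e \<in> E \<Longrightarrow> t < e \<Longrightarrow> a e = 0"
  shows "a t * y ^ t = (\<Sum>l<t. y ^ l * (if l \<in> E then - a l else 0))"
proof -
  let ?b = "\<lambda>l. y ^ l * (if l \<in> E then a l else 0)"
  have "(\<Sum>e\<in>E - {t}. y ^ e * a e) = (\<Sum>l\<in>E - {t}. ?b l)"
    by (rule sum.cong) auto
  also have "\<dots> = (\<Sum>l<t. ?b l)"
    using E above by (intro sum.mono_neutral_cong) (auto simp: not_less_iff_gr_or_eq)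
  finally have "y ^ t * a t + (\<Sum>l<t. ?b l) = 0"
    using zero E t by (simp add: sum.remove)
  then have "a t * y ^ t = - (\<Sum>l<t. ?b l)"
    by (simp add: mult.commute eq_neg_iff_add_eq_0)
  also have "\<dots> = (\<Sum>l<t. y ^ l * (if l \<in> E then - a l else 0))"
    unfolding sum_negf[symmetric] by (rule sum.cong) auto
  finally show ?thesis .
qed

lemma msubst_expand_var_upd:
  assumes "f = (\<Sum>e\<in>E. mvar v ^ e * fe e)" "\<And>e. v \<notin> mvars (fe e)"
  shows "msubst f (G(v := t)) = (\<Sum>e\<in>E. t ^ e * msubst (fe e) G)"
proof -
  have "msubst (fe e) (G(v := t)) = msubst (fe e) G" for e
    by (rule msubst_cong) (use assms(2) in auto)
  then show ?thesis
    by (simp add: msubst_expand_var[OF assms(1)])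
qed

lemma coeffs_vanish_if_fresh_var:
  assumes E: "finite E" and f: "f = (\<Sum>e\<in>E. mvar v ^ e * fe e)"
    and v: "\<And>e. v \<notin> mvars (fe e)" and fe: "\<And>e. mvars (fe e) \<subseteq> mvars f"
    and N: "\<And>i. i \<in> mvars f \<Longrightarrow> N \<notin> mvars (G i)"
    and vanish: "msubst f (G(v := mvar N)) = 0" and e: "e \<in> E"
  shows "msubst (fe e) G = 0"
proof (rule sum_mvar_powers_eq_0D[OF E _ _ e])
  show "(\<Sum>e\<in>E. mvar N ^ e * msubst (fe e) G) = 0"
    using vanish by (simp add: msubst_expand_var_upd[OF f v])
  show "N \<notin> mvars (msubst (fe e) G)" for e
    using mvars_msubst[of "fe e" G] fe[of e] N by blast
qed

subsection \<open>Relations of a tuple with unit projective apices\<close>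

text \<open>The substitution \<open>x\<^sub>n \<mapsto> x\<^sub>n - H j\<close> turns \<open>H + x\<^sub>n e\<^sub>j\<close> into \<open>H\<close> with \<open>H j\<close> replaced
  by \<open>x\<^sub>n\<close>, since no \<open>H i\<close> involves \<open>x\<^sub>n\<close>.\<close>

lemma proj_image_apex_unit_vec_relation:
  assumes H: "poly_tuple n m H" and apex: "proj_image_apex K n m H (unit_vec j)"
    and f: "f \<in> poly_over K m" "msubst f H = 0"
  shows "msubst f (H(j := mvar n)) = 0"
proof -
  define \<sigma> where "\<sigma> = mvar(n := mvar n - H j)"
  have "msubst (H i + mvar n * mconst (unit_vec j i)) \<sigma> = (H(j := mvar n)) i"
    if "i \<in> mvars f" for i
  proof -
    have "i < m"
      using f(1) that by (auto simp: poly_over_def)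
    then have "msubst (H i) \<sigma> = msubst (H i) mvar"
      using H by (intro msubst_cong) (auto simp: poly_tuple_def \<sigma>_def)
    then show ?thesis
      by (simp add: msubst_add msubst_mult \<sigma>_def unit_vec_def)
  qed
  then have "msubst f (H(j := mvar n))
      = msubst (msubst f (\<lambda>i. H i + mvar n * mconst (unit_vec j i))) \<sigma>"
    by (simp add: msubst_compose cong: msubst_cong)
  also have "\<dots> = 0"
    using apex f by (simp add: proj_image_apex_def)
  finally show ?thesis .
qed

lemma relation_override_unit_apices:
  assumes K: "subfield K" and H: "poly_tuple n m H"
    and apex: "\<And>j. j \<in> V \<Longrightarrow> proj_image_apex K n m H (unit_vec j)"
    and V: "finite V" and f: "f \<in> poly_over K m" "msubst f H = 0"
  shows "msubst f (override_on H T V) = 0"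
  using V apex f
proof (induction V arbitrary: f rule: finite_induct)
  case empty
  then show ?case by simp
next
  case (insert v V)
  obtain E fe where E: "finite E" and f: "f = (\<Sum>e\<in>E. mvar v ^ e * fe e)"
    and v: "\<And>e. v \<notin> mvars (fe e)" and fe: "\<And>e. mvars (fe e) \<subseteq> mvars f"
    and fe_coeffs: "\<And>K e. subfield K \<Longrightarrow> coeffs_in K f \<Longrightarrow> coeffs_in K (fe e)"
    by (rule mpoly_expand_var[of f v]) blast
  have fe_poly: "fe e \<in> poly_over K m" for e
    using insert.prems(2) fe_coeffs[OF K] fe[of e] by (auto simp: poly_over_iff[OF K])
  have fresh: "n \<notin> mvars (H i)" if "i \<in> mvars f" for i
    using that insert.prems(2) H by (fastforce simp: poly_over_def poly_tuple_def)
  have "msubst (fe e) H = 0" if "e \<in> E" for e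
    using coeffs_vanish_if_fresh_var[OF E f v fe fresh _ that]
      proj_image_apex_unit_vec_relation[OF H insert.prems(1)[of v] insert.prems(2,3)]
    by simp
  then have "msubst (fe e) (override_on H T V) = 0" if "e \<in> E" for e
    using insert.IH insert.prems(1) fe_poly that by blast
  then show ?case
    unfolding override_on_insert msubst_expand_var_upd[OF f v] by simp
qed

lemma relation_transfer_override:
  assumes K: "subfield K"
    and base: "\<And>g. coeffs_in K g \<Longrightarrow> mvars g \<subseteq> W \<Longrightarrow> msubst g A = 0 \<Longrightarrow> msubst g B = 0"
    and V: "finite V" and f: "coeffs_in K f" "mvars f \<subseteq> V \<union> W"
    and vanish: "\<And>T. msubst f (override_on A T V) = 0"
  shows "msubst f (override_on B T V) = 0"
  using V f vanish
proof (induction V arbitrary: f T rule: finite_induct)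
  case empty
  then show ?case using base by simp
next
  case (insert v V)
  obtain E fe where E: "finite E" and f: "f = (\<Sum>e\<in>E. mvar v ^ e * fe e)"
    and v: "\<And>e. v \<notin> mvars (fe e)" and fe: "\<And>e. mvars (fe e) \<subseteq> mvars f"
    and fe_coeffs: "\<And>K e. subfield K \<Longrightarrow> coeffs_in K f \<Longrightarrow> coeffs_in K (fe e)"
    by (rule mpoly_expand_var[of f v]) blast
  have "msubst (fe e) (override_on A T' V) = 0" if e: "e \<in> E" for e T'
  proof -
    let ?S = "\<Union>i\<in>mvars f. mvars (A i) \<union> mvars (T' i)"
    obtain N where N: "N \<notin> ?S"
      using ex_new_if_finite[OF infinite_UNIV_nat, of ?S] by auto
    have "(override_on A T' V)(v := mvar N) = override_on A (T'(v := mvar N)) (insert v V)"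
      using insert.hyps(2) by (simp add: override_on_def fun_eq_iff)
    then have "msubst f ((override_on A T' V)(v := mvar N)) = 0"
      using insert.prems(3) by presburger
    moreover have "N \<notin> mvars (override_on A T' V i)" if "i \<in> mvars f" for i
      using N that by (simp add: override_on_def)
    ultimately show ?thesis
      using coeffs_vanish_if_fresh_var[OF E f v fe _ _ e] by blast
  qed
  moreover have "mvars (fe e) \<subseteq> V \<union> W" for e
    using fe[of e] v[of e] insert.prems(2) by blast
  ultimately have "msubst (fe e) (override_on B T V) = 0" if "e \<in> E" for e
    using insert.IH fe_coeffs[OF K insert.prems(1)] that by blast
  then show ?case
    unfolding override_on_insert msubst_expand_var_upd[OF f v] by simp
qed

definition preserves_relations :: "'a::field set \<Rightarrow> nat \<Rightarrow> (nat \<Rightarrow> 'a mpoly) \<Rightarrow> (nat \<Rightarrow> 'a mpoly) \<Rightarrow> bool"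
  where "preserves_relations K m G B \<longleftrightarrow> (\<forall>f\<in>poly_over K m. msubst f G = 0 \<longrightarrow> msubst f B = 0)"

lemma preserves_relations_drop_unit_apices:
  assumes K: "subfield K" and H: "poly_tuple n m H" and s: "s \<le> m"
    and apex: "\<forall>j<s. proj_image_apex K n m H (unit_vec j)"
  shows "preserves_relations K m H B \<longleftrightarrow>
    preserves_relations K (m - s) (\<lambda>i. H (i + s)) (\<lambda>i. B (i + s))"
proof
  assume HB: "preserves_relations K m H B"
  show "preserves_relations K (m - s) (\<lambda>i. H (i + s)) (\<lambda>i. B (i + s))"
    unfolding preserves_relations_def
  proof (intro ballI impI)
    fix g assume g: "g \<in> poly_over K (m - s)" "msubst g (\<lambda>i. H (i + s)) = 0"
    have "mrename (\<lambda>i. i + s) g \<in> poly_over K m"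
      using g(1) by (intro poly_over_mrename[OF K]) (auto simp: poly_over_iff[OF K])
    with g(2) HB show "msubst g (\<lambda>i. B (i + s)) = 0"
      unfolding preserves_relations_def by (metis msubst_mrename)
  qed
next
  assume HB': "preserves_relations K (m - s) (\<lambda>i. H (i + s)) (\<lambda>i. B (i + s))"
  have base: "msubst g B = 0"
    if g: "coeffs_in K g" "mvars g \<subseteq> {s..<m}" "msubst g H = 0" for g
  proof -
    let ?g = "mrename (\<lambda>i. i - s) g"
    have "g \<in> poly_over K m"
      using g(1,2) by (auto simp: poly_over_iff[OF K])
    then have "?g \<in> poly_over K (m - s)"
      using g(2) by (intro poly_over_mrename[OF K]) fastforce+
    moreover have "msubst ?g (\<lambda>i. G (i + s)) = msubst g G" for G
      unfolding msubst_mrename by (rule msubst_cong) (use g(2) in auto)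
    ultimately show ?thesis
      using HB' g(3) unfolding preserves_relations_def by metis
  qed
  show "preserves_relations K m H B"
    unfolding preserves_relations_def
  proof (intro ballI impI)
    fix f assume f: "f \<in> poly_over K m" "msubst f H = 0"
    have vanish: "msubst f (override_on H T {..<s}) = 0" for T
      by (rule relation_override_unit_apices[OF K H _ _ f]) (use apex in auto)
    have "msubst f (override_on B B {..<s}) = 0"
      by (rule relation_transfer_override[OF K base _ _ _ vanish])
         (use f(1) s in \<open>auto simp: poly_over_iff[OF K]\<close>)
    then show "msubst f B = 0"
      by (simp add: override_on_def)
  qed
qed

subsection \<open>Dimension counting\<close>

lemma linear_relation_lift_pivot:
  fixes \<mu> :: "'d \<Rightarrow> 'b \<Rightarrow> 'a::field"
  assumes K: "subfield K" and \<Delta>: "finite \<Delta>" "\<delta>0 \<in> \<Delta>" and pivot: "\<mu> \<delta>0 b0 \<noteq> 0"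
    and \<mu>_K: "\<forall>\<delta>\<in>\<Delta>. \<mu> \<delta> b0 \<in> K"
    and \<kappa>': "\<forall>\<delta>\<in>\<Delta> - {\<delta>0}. \<kappa>' \<delta> \<in> K" "\<exists>\<delta>\<in>\<Delta> - {\<delta>0}. \<kappa>' \<delta> \<noteq> 0"
    and solves: "\<forall>b\<in>B. (\<Sum>\<delta>\<in>\<Delta> - {\<delta>0}. \<kappa>' \<delta> * (\<mu> \<delta> b - \<mu> \<delta> b0 / \<mu> \<delta>0 b0 * \<mu> \<delta>0 b)) = 0"
  shows "\<exists>\<kappa>. (\<forall>\<delta>\<in>\<Delta>. \<kappa> \<delta> \<in> K) \<and> (\<exists>\<delta>\<in>\<Delta>. \<kappa> \<delta> \<noteq> 0) \<and>
    (\<forall>b\<in>insert b0 B. (\<Sum>\<delta>\<in>\<Delta>. \<kappa> \<delta> * \<mu> \<delta> b) = 0)"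
proof -
  define S where "S = (\<Sum>\<delta>\<in>\<Delta> - {\<delta>0}. \<kappa>' \<delta> * \<mu> \<delta> b0)"
  define \<kappa> where "\<kappa> = \<kappa>'(\<delta>0 := - S / \<mu> \<delta>0 b0)"
  have split: "(\<Sum>\<delta>\<in>\<Delta>. \<kappa> \<delta> * \<mu> \<delta> b) = - S / \<mu> \<delta>0 b0 * \<mu> \<delta>0 b + (\<Sum>\<delta>\<in>\<Delta> - {\<delta>0}. \<kappa>' \<delta> * \<mu> \<delta> b)"
    for b
  proof -
    have "(\<Sum>\<delta>\<in>\<Delta>. \<kappa> \<delta> * \<mu> \<delta> b) = \<kappa> \<delta>0 * \<mu> \<delta>0 b + (\<Sum>\<delta>\<in>\<Delta> - {\<delta>0}. \<kappa> \<delta> * \<mu> \<delta> b)"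
      using \<Delta> by (simp add: sum.remove)
    also have "(\<Sum>\<delta>\<in>\<Delta> - {\<delta>0}. \<kappa> \<delta> * \<mu> \<delta> b) = (\<Sum>\<delta>\<in>\<Delta> - {\<delta>0}. \<kappa>' \<delta> * \<mu> \<delta> b)"
      by (rule sum.cong) (auto simp: \<kappa>_def)
    finally show ?thesis
      by (simp add: \<kappa>_def)
  qed
  have "\<forall>\<delta>\<in>\<Delta>. \<kappa> \<delta> \<in> K"
    using \<kappa>'(1) \<mu>_K \<Delta>(2) unfolding \<kappa>_def S_def
    by (auto intro!: subfield_divide[OF K] subfield_uminus[OF K] subfield_sum[OF K] subfield_mult[OF K])
  moreover have "\<exists>\<delta>\<in>\<Delta>. \<kappa> \<delta> \<noteq> 0"
    using \<kappa>'(2) by (auto simp: \<kappa>_def)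
  moreover have "(\<Sum>\<delta>\<in>\<Delta>. \<kappa> \<delta> * \<mu> \<delta> b) = 0" if "b \<in> B" for b
  proof -
    have "(\<Sum>\<delta>\<in>\<Delta> - {\<delta>0}. \<kappa>' \<delta> * (\<mu> \<delta> b0 / \<mu> \<delta>0 b0 * \<mu> \<delta>0 b)) = S / \<mu> \<delta>0 b0 * \<mu> \<delta>0 b"
      unfolding S_def sum_divide_distrib sum_distrib_right by (rule sum.cong) simp_all
    then show ?thesis
      using solves that by (simp add: split right_diff_distrib sum_subtractf)
  qed
  moreover have "(\<Sum>\<delta>\<in>\<Delta>. \<kappa> \<delta> * \<mu> \<delta> b0) = 0"
    using pivot by (simp add: split S_def[symmetric])
  ultimately show ?thesis
    by blast
qed

lemma linear_dependent_if_card_gt: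
  fixes \<mu> :: "'d \<Rightarrow> 'b \<Rightarrow> 'a::field"
  assumes K: "subfield K" and B: "finite B" and \<Delta>: "finite \<Delta>" "card B < card \<Delta>"
    and \<mu>_K: "\<forall>\<delta>\<in>\<Delta>. \<forall>b\<in>B. \<mu> \<delta> b \<in> K"
  shows "\<exists>\<kappa>. (\<forall>\<delta>\<in>\<Delta>. \<kappa> \<delta> \<in> K) \<and> (\<exists>\<delta>\<in>\<Delta>. \<kappa> \<delta> \<noteq> 0) \<and> (\<forall>b\<in>B. (\<Sum>\<delta>\<in>\<Delta>. \<kappa> \<delta> * \<mu> \<delta> b) = 0)"
  using B \<Delta> \<mu>_K
proof (induction B arbitrary: \<Delta> \<mu> rule: finite_induct)
  case empty
  then obtain \<delta> where "\<delta> \<in> \<Delta>"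
    by fastforce
  then show ?case
    using subfield_1[OF K] by (intro exI[of _ "\<lambda>_. 1"]) auto
next
  case (insert b0 B)
  show ?case
  proof (cases "\<forall>\<delta>\<in>\<Delta>. \<mu> \<delta> b0 = 0")
    case True
    then show ?thesis
      using insert.IH[of \<Delta> \<mu>] insert.prems insert.hyps by auto
  next
    case False
    then obtain \<delta>0 where \<delta>0: "\<delta>0 \<in> \<Delta>" "\<mu> \<delta>0 b0 \<noteq> 0"
      by auto
    let ?\<mu>' = "\<lambda>\<delta> b. \<mu> \<delta> b - \<mu> \<delta> b0 / \<mu> \<delta>0 b0 * \<mu> \<delta>0 b"
    have "card B < card (\<Delta> - {\<delta>0})"
      using insert.prems insert.hyps \<delta>0 by simp
    moreover have "\<forall>\<delta>\<in>\<Delta> - {\<delta>0}. \<forall>b\<in>B. ?\<mu>' \<delta> b \<in> K"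
      using insert.prems(3) \<delta>0
      by (auto intro!: subfield_diff[OF K] subfield_mult[OF K] subfield_divide[OF K])
    ultimately obtain \<kappa>' where "\<forall>\<delta>\<in>\<Delta> - {\<delta>0}. \<kappa>' \<delta> \<in> K" "\<exists>\<delta>\<in>\<Delta> - {\<delta>0}. \<kappa>' \<delta> \<noteq> 0"
        "\<forall>b\<in>B. (\<Sum>\<delta>\<in>\<Delta> - {\<delta>0}. \<kappa>' \<delta> * ?\<mu>' \<delta> b) = 0"
      using insert.IH[of "\<Delta> - {\<delta>0}" ?\<mu>'] insert.prems(1) by auto
    then show ?thesis
      using linear_relation_lift_pivot[where \<mu> = \<mu>, OF K insert.prems(1) \<delta>0]
        insert.prems(3) by blast
  qed
qed

definition kspan :: "'a::field set \<Rightarrow> 'a mpoly set \<Rightarrow> 'a mpoly set" where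
  "kspan K S = {x. \<exists>\<mu>. (\<forall>b\<in>S. \<mu> b \<in> K) \<and> x = (\<Sum>b\<in>S. mconst (\<mu> b) * b)}"

lemma kspan_0: "subfield K \<Longrightarrow> 0 \<in> kspan K S"
  unfolding kspan_def by (intro CollectI exI[of _ "\<lambda>_. 0"]) (simp add: subfield_0)

lemma kspan_add: "subfield K \<Longrightarrow> x \<in> kspan K S \<Longrightarrow> y \<in> kspan K S \<Longrightarrow> x + y \<in> kspan K S"
  unfolding kspan_def
proof (clarify)
  fix \<mu> \<nu> assume K: "subfield K" and m: "\<forall>b\<in>S. \<mu> b \<in> K" and n: "\<forall>b\<in>S. \<nu> b \<in> K"
  show "\<exists>\<rho>. (\<forall>b\<in>S. \<rho> b \<in> K) \<and> (\<Sum>b\<in>S. mconst (\<mu> b) * b) + (\<Sum>b\<in>S. mconst (\<nu> b) * b) = (\<Sum>b\<in>S. mconst (\<rho> b) * b)"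
    using m n K by (intro exI[of _ "\<lambda>b. \<mu> b + \<nu> b"]) (simp add: subfield_add mconst_add distrib_right sum.distrib)
qed

lemma kspan_scale: "subfield K \<Longrightarrow> c \<in> K \<Longrightarrow> x \<in> kspan K S \<Longrightarrow> mconst c * x \<in> kspan K S"
  unfolding kspan_def
proof (clarify)
  fix \<mu> assume K: "subfield K" and c: "c \<in> K" and m: "\<forall>b\<in>S. \<mu> b \<in> K"
  show "\<exists>\<rho>. (\<forall>b\<in>S. \<rho> b \<in> K) \<and> mconst c * (\<Sum>b\<in>S. mconst (\<mu> b) * b) = (\<Sum>b\<in>S. mconst (\<rho> b) * b)"
    using m K c by (intro exI[of _ "\<lambda>b. c * \<mu> b"]) (simp add: subfield_mult mconst_mult sum_distrib_left mult_ac)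
qed

lemma kspan_sum: "subfield K \<Longrightarrow> (\<And>a. a \<in> A \<Longrightarrow> f a \<in> kspan K S) \<Longrightarrow> sum f A \<in> kspan K S"
  by (induction A rule: infinite_finite_induct) (auto simp: kspan_0 kspan_add)

lemma kspan_base: "subfield K \<Longrightarrow> finite S \<Longrightarrow> b \<in> S \<Longrightarrow> b \<in> kspan K S"
proof -
  assume K: "subfield K" and S: "finite S" and b: "b \<in> S"
  have "(\<Sum>x\<in>S. mconst (if x = b then 1 else 0) * x) = (\<Sum>x\<in>S. if x = b then x else 0)"
    by (rule sum.cong) auto
  also have "\<dots> = b" using S b by (simp add: sum.delta)
  finally show ?thesis unfolding kspan_def
    by (intro CollectI exI[of _ "\<lambda>x. if x = b then 1 else 0"]) (simp add: subfield_0[OF K] subfield_1[OF K])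
qed

lemma kspan_mono: "subfield K \<Longrightarrow> finite S' \<Longrightarrow> S \<subseteq> S' \<Longrightarrow> kspan K S \<subseteq> kspan K S'"
proof
  fix x assume K: "subfield K" and S': "finite S'" and sub: "S \<subseteq> S'" and x: "x \<in> kspan K S"
  then obtain \<mu> where m: "\<forall>b\<in>S. \<mu> b \<in> K" and xe: "x = (\<Sum>b\<in>S. mconst (\<mu> b) * b)"
    by (auto simp: kspan_def)
  have "x = (\<Sum>b\<in>S. mconst (\<mu> b) * b)" by (fact xe)
  also have "\<dots> \<in> kspan K S'"
    by (intro kspan_sum K kspan_scale) (use m sub S' K in \<open>auto intro: kspan_base\<close>)
  finally show "x \<in> kspan K S'" .
qed

lemma kspan_mult_into:
  assumes K: "subfield K" and S': "finite S'" and h: "\<And>b. b \<in> S \<Longrightarrow> q * b \<in> kspan K S'"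
    and x: "x \<in> kspan K S"
  shows "q * x \<in> kspan K S'"
proof -
  obtain \<mu> where m: "\<forall>b\<in>S. \<mu> b \<in> K" and xe: "x = (\<Sum>b\<in>S. mconst (\<mu> b) * b)"
    using x by (auto simp: kspan_def)
  have "q * x = (\<Sum>b\<in>S. mconst (\<mu> b) * (q * b))"
    by (simp add: xe sum_distrib_left mult_ac)
  also have "\<dots> \<in> kspan K S'"
    by (intro kspan_sum K kspan_scale) (use m h in auto)
  finally show ?thesis .
qed

lemma kspan_linear_dependent:
  fixes x :: "'d \<Rightarrow> 'a::field mpoly"
  assumes K: "subfield K" and B: "finite B" and D: "finite \<Delta>" and card: "card B < card \<Delta>"
    and x: "\<And>\<delta>. \<delta> \<in> \<Delta> \<Longrightarrow> x \<delta> \<in> kspan K B"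
  shows "\<exists>\<kappa>. (\<forall>\<delta>\<in>\<Delta>. \<kappa> \<delta> \<in> K) \<and> (\<exists>\<delta>\<in>\<Delta>. \<kappa> \<delta> \<noteq> 0) \<and> (\<Sum>\<delta>\<in>\<Delta>. mconst (\<kappa> \<delta>) * x \<delta>) = 0"
proof -
  have "\<forall>\<delta>\<in>\<Delta>. \<exists>\<mu>. (\<forall>b\<in>B. \<mu> b \<in> K) \<and> x \<delta> = (\<Sum>b\<in>B. mconst (\<mu> b) * b)"
    using x by (auto simp: kspan_def)
  then obtain M where M: "\<And>\<delta>. \<delta> \<in> \<Delta> \<Longrightarrow> (\<forall>b\<in>B. M \<delta> b \<in> K) \<and> x \<delta> = (\<Sum>b\<in>B. mconst (M \<delta> b) * b)"
    by (metis (no_types) bchoice)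
  obtain \<kappa> where l: "\<forall>\<delta>\<in>\<Delta>. \<kappa> \<delta> \<in> K" "\<exists>\<delta>\<in>\<Delta>. \<kappa> \<delta> \<noteq> 0" "\<forall>b\<in>B. (\<Sum>\<delta>\<in>\<Delta>. \<kappa> \<delta> * M \<delta> b) = 0"
    using linear_dependent_if_card_gt[OF K B D card, of M] M by blast
  have "(\<Sum>\<delta>\<in>\<Delta>. mconst (\<kappa> \<delta>) * x \<delta>) = (\<Sum>\<delta>\<in>\<Delta>. \<Sum>b\<in>B. mconst (\<kappa> \<delta> * M \<delta> b) * b)"
    by (rule sum.cong[OF refl]) (simp add: M sum_distrib_left mconst_mult mult_ac)
  also have "\<dots> = (\<Sum>b\<in>B. mconst (\<Sum>\<delta>\<in>\<Delta>. \<kappa> \<delta> * M \<delta> b) * b)"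
    by (subst sum.swap) (simp add: mconst_sum sum_distrib_right)
  also have "\<dots> = 0" using l(3) by simp
  finally show ?thesis using l(1,2) by blast
qed

definition subalg_gen :: "'a::field set \<Rightarrow> (nat \<Rightarrow> 'a mpoly) \<Rightarrow> nat set \<Rightarrow> 'a mpoly set" where
  "subalg_gen K g J = {msubst p g | p. coeffs_in K p \<and> mvars p \<subseteq> J}"

lemma subalg_gen_mult: "subfield K \<Longrightarrow> x \<in> subalg_gen K g J \<Longrightarrow> y \<in> subalg_gen K g J \<Longrightarrow> x * y \<in> subalg_gen K g J"
  unfolding subalg_gen_def
proof (clarify)
  fix p q assume K: "subfield K" and p: "coeffs_in K p" "mvars p \<subseteq> J" and q: "coeffs_in K q" "mvars q \<subseteq> J"
  show "\<exists>pa. msubst p g * msubst q g = msubst pa g \<and> coeffs_in K pa \<and> mvars pa \<subseteq> J"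
    using p q K mvars_mult[of p q] by (intro exI[of _ "p * q"]) (auto simp: msubst_mult coeffs_in_mult)
qed

lemma subalg_gen_1: "subfield K \<Longrightarrow> 1 \<in> subalg_gen K g J"
  unfolding subalg_gen_def using coeffs_in_1[of K] by (intro CollectI exI[of _ 1]) auto

lemma subalg_gen_prod: "subfield K \<Longrightarrow> (\<And>i. i \<in> A \<Longrightarrow> f i \<in> subalg_gen K g J) \<Longrightarrow> prod f A \<in> subalg_gen K g J"
  by (induction A rule: infinite_finite_induct) (auto simp: subalg_gen_1 subalg_gen_mult)

lemma ex_uniform_bound:
  fixes P :: "'i \<Rightarrow> nat \<Rightarrow> bool"
  assumes "finite I" and "\<And>i. i \<in> I \<Longrightarrow> \<exists>a. P i a" and "\<And>i a b. P i a \<Longrightarrow> a \<le> b \<Longrightarrow> P i b"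
  shows "\<exists>a. \<forall>i\<in>I. P i a"
  using assms(1,2)
proof (induction I rule: finite_induct)
  case empty then show ?case by simp
next
  case (insert x I)
  then obtain a where a: "\<forall>i\<in>I. P i a" by auto
  obtain b where b: "P x b" using insert.prems by auto
  show ?case using a b assms(3) by (intro exI[of _ "max a b"]) (auto intro: max.cobounded1 max.cobounded2)
qed

text \<open>With \<open>D = (M + 1) ^ r * P\<close>: a span with at most \<open>(M * D + 1) ^ r * P\<close> generators is
  smaller than the number \<open>(D + 1) ^ k\<close> of exponent vectors in \<open>{..D} ^ k\<close>.\<close>

lemma power_count_lt:
  fixes M r P k :: nat
  assumes "r < k" "1 \<le> P"
  shows "(M * ((M+1)^r * P) + 1)^r * P < ((M+1)^r * P + 1)^k"
proof -
  define D where "D = (M+1)^r * P"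
  have "M * D + 1 \<le> (M+1) * (D+1)" by (simp add: algebra_simps)
  then have "(M * D + 1)^r * P \<le> ((M+1) * (D+1))^r * P" by (simp add: power_mono)
  also have "\<dots> = D * (D+1)^r" unfolding power_mult_distrib D_def by (simp only: mult_ac)
  also have "\<dots> < (D+1) * (D+1)^r" by simp
  also have "\<dots> = (D+1)^(Suc r)" by simp
  also have "\<dots> \<le> (D+1)^k" using assms(1) by (intro power_increasing) auto
  finally show ?thesis by (simp add: D_def)
qed

lemma not_alg_indep_if_power_products_dependent:
  assumes K: "subfield K" and \<Delta>: "finite \<Delta>" "\<Delta> \<subseteq> extensional {..<k}"
    and \<kappa>: "\<forall>\<delta>\<in>\<Delta>. \<kappa> \<delta> \<in> K" "\<exists>\<delta>\<in>\<Delta>. \<kappa> \<delta> \<noteq> 0"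
    and rel: "(\<Sum>\<delta>\<in>\<Delta>. mconst (\<kappa> \<delta>) * (\<Prod>i<k. u i ^ \<delta> i)) = 0"
  shows "\<not> alg_indep K k u"
proof -
  define mk where "mk \<delta> = (\<Sum>i<k. Poly_Mapping.single i (\<delta> i))" for \<delta> :: "nat \<Rightarrow> nat"
  have lookup_mk: "Poly_Mapping.lookup (mk \<delta>) i = (if i < k then \<delta> i else 0)" for \<delta> i
    by (simp add: mk_def lookup_sum lookup_single when_def)
  have keys_mk: "Poly_Mapping.keys (mk \<delta>) \<subseteq> {..<k}" for \<delta>
    by (auto simp: in_keys_iff lookup_mk split: if_splits)
  define f where "f = (\<Sum>\<delta>\<in>\<Delta>. Poly_Mapping.single (mk \<delta>) (\<kappa> \<delta>))"
  have "f \<in> poly_over K k"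
    using mvars_sum mvars_single keys_mk \<kappa>(1)
    unfolding poly_over_iff[OF K] f_def by (fastforce intro!: coeffs_in_sum coeffs_in_single K)
  moreover have "msubst f u = 0"
  proof -
    have "monom_subst (mk \<delta>) u = (\<Prod>i<k. u i ^ \<delta> i)" for \<delta>
      by (subst monom_subst_superset[of "{..<k}"]) (auto simp: keys_mk lookup_mk)
    then show ?thesis
      using rel by (simp add: f_def msubst_sum msubst_single)
  qed
  moreover have "f \<noteq> 0"
  proof -
    obtain \<delta>0 where \<delta>0: "\<delta>0 \<in> \<Delta>" "\<kappa> \<delta>0 \<noteq> 0"
      using \<kappa>(2) by blast
    have mk_eq: "mk \<delta> = mk \<delta>0 \<longleftrightarrow> \<delta> = \<delta>0" if "\<delta> \<in> \<Delta>" for \<delta>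
    proof
      assume eq: "mk \<delta> = mk \<delta>0"
      have "\<delta> i = \<delta>0 i" if "i < k" for i
        using arg_cong[OF eq, of "\<lambda>\<mu>. Poly_Mapping.lookup \<mu> i"] that by (simp add: lookup_mk)
      then show "\<delta> = \<delta>0"
        using \<Delta>(2) \<open>\<delta> \<in> \<Delta>\<close> \<delta>0(1) by (auto intro: extensionalityI)
    qed simp
    have "Poly_Mapping.lookup f (mk \<delta>0) = (\<Sum>\<delta>\<in>\<Delta>. if \<delta> = \<delta>0 then \<kappa> \<delta> else 0)"
      unfolding f_def lookup_sum by (rule sum.cong) (auto simp: lookup_single when_def mk_eq)
    also have "\<dots> = \<kappa> \<delta>0"
      using \<delta>0(1) \<Delta>(1) by simp
    finally show ?thesis
      using \<delta>0(2) by auto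
  qed
  ultimately show ?thesis
    unfolding alg_indep_def by blast
qed

text \<open>Level \<open>X\<close> is the \<open>K\<close>-span of the monomials \<open>\<Prod>i<N. g i ^ \<gamma> i\<close> with \<open>\<gamma> j \<le> X\<close> on \<open>J\<close>
  and \<open>\<gamma> j < e j\<close> off \<open>J\<close>. Using the relations, multiplication by \<open>lead_prod * g j\<close> raises
  the level by a bounded amount. Level \<open>X\<close> has dimension \<open>O(X ^ card J)\<close>, while after scaling
  by a power of \<open>lead_prod\<close> the \<open>(D + 1) ^ k\<close> power products of degree \<open>\<le> D\<close> in each of
  \<open>k\<close> elements of \<open>K[g]\<close> lie in a level linear in \<open>D\<close>; for \<open>k > card J\<close> they are dependent.\<close>

locale algebraic_over_subfamily =
  fixes K :: "'a::field set" and g :: "nat \<Rightarrow> 'a mpoly" and N :: nat and J :: "nat set"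
    and e :: "nat \<Rightarrow> nat" and c :: "nat \<Rightarrow> 'a mpoly" and r :: "nat \<Rightarrow> nat \<Rightarrow> 'a mpoly"
  assumes K: "subfield K" and J_subset: "J \<subseteq> {..<N}"
    and degree_pos: "\<And>j. j < N \<Longrightarrow> j \<notin> J \<Longrightarrow> 1 \<le> e j"
    and lead_in_subalg: "\<And>j. j < N \<Longrightarrow> j \<notin> J \<Longrightarrow> c j \<in> subalg_gen K g J"
    and lead_nonzero: "\<And>j. j < N \<Longrightarrow> j \<notin> J \<Longrightarrow> c j \<noteq> 0"
    and coeff_in_subalg: "\<And>j l. j < N \<Longrightarrow> j \<notin> J \<Longrightarrow> l < e j \<Longrightarrow> r j l \<in> subalg_gen K g J"
    and alg_relation: "\<And>j. j < N \<Longrightarrow> j \<notin> J \<Longrightarrow> c j * g j ^ e j = (\<Sum>l<e j. g j ^ l * r j l)"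
begin

definition bounded_exps :: "nat \<Rightarrow> (nat \<Rightarrow> nat) set" where
  "bounded_exps X = PiE {..<N} (\<lambda>i. if i \<in> J then {..X} else {..<e i})"

definition gmonom :: "(nat \<Rightarrow> nat) \<Rightarrow> 'a mpoly" where
  "gmonom \<gamma> = (\<Prod>i<N. g i ^ \<gamma> i)"

definition level_span :: "nat \<Rightarrow> 'a mpoly set" where
  "level_span X = kspan K (gmonom ` bounded_exps X)"

definition raises_level :: "'a mpoly \<Rightarrow> nat \<Rightarrow> bool" where
  "raises_level p a \<longleftrightarrow> (\<forall>X. \<forall>w\<in>level_span X. p * w \<in> level_span (X + a))"

lemma finite_bounded_exps: "finite (bounded_exps X)"
  by (simp add: bounded_exps_def finite_PiE)

lemma bounded_exps_mono: "X \<le> Y \<Longrightarrow> bounded_exps X \<subseteq> bounded_exps Y"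
  unfolding bounded_exps_def by (rule PiE_mono) auto

lemma level_span_mono: "X \<le> Y \<Longrightarrow> level_span X \<subseteq> level_span Y"
  unfolding level_span_def by (rule kspan_mono[OF K]) (simp_all add: finite_bounded_exps image_mono bounded_exps_mono)

lemma gmonom_in_level_span: "\<gamma> \<in> bounded_exps X \<Longrightarrow> gmonom \<gamma> \<in> level_span X"
  unfolding level_span_def by (rule kspan_base[OF K]) (auto simp: finite_bounded_exps)

lemma one_in_level_span: "1 \<in> level_span 0"
proof -
  let ?\<gamma> = "restrict (\<lambda>_. 0::nat) {..<N}"
  have "0 < e i" if "i < N" "i \<notin> J" for i using degree_pos[OF that] by simp
  then have "?\<gamma> \<in> bounded_exps 0" by (auto simp: bounded_exps_def PiE_iff)
  moreover have "gmonom ?\<gamma> = 1" by (simp add: gmonom_def)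
  ultimately show ?thesis using gmonom_in_level_span by metis
qed

definition gmonom_except :: "(nat \<Rightarrow> nat) \<Rightarrow> nat \<Rightarrow> 'a mpoly" where
  "gmonom_except \<gamma> j = (\<Prod>i\<in>{..<N}-{j}. g i ^ \<gamma> i)"

lemma gmonom_split: "j < N \<Longrightarrow> gmonom \<gamma> = g j ^ \<gamma> j * gmonom_except \<gamma> j"
  unfolding gmonom_def gmonom_except_def by (subst prod.remove[of _ j]) auto

lemma gmonom_except_upd: "gmonom_except (\<gamma>(j := a)) j = gmonom_except \<gamma> j"
  unfolding gmonom_except_def by (rule prod.cong) auto

lemma gmonom_upd: "j < N \<Longrightarrow> gmonom (\<gamma>(j := a)) = g j ^ a * gmonom_except \<gamma> j"
  using gmonom_split[of j "\<gamma>(j := a)"] gmonom_except_upd by simp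

lemma bounded_exps_upd:
  assumes "\<gamma> \<in> bounded_exps X" "j < N" "a \<in> (if j \<in> J then {..Y} else {..<e j})" "X \<le> Y"
  shows "\<gamma>(j := a) \<in> bounded_exps Y"
proof -
  have g: "\<gamma> i \<in> (if i \<in> J then {..X} else {..<e i})" if "i < N" for i
    using PiE_mem[OF assms(1)[unfolded bounded_exps_def], of i] that by simp
  have "(\<gamma>(j := a)) i \<in> (if i \<in> J then {..Y} else {..<e i})" if "i < N" for i
  proof (cases "i = j")
    case True then show ?thesis using assms(3) by (auto split: if_splits)
  next
    case False then show ?thesis using g[OF that] assms(4) by (auto split: if_splits)
  qed
  moreover have "\<gamma>(j := a) \<in> extensional {..<N}"
    using assms(1,2) by (auto simp: bounded_exps_def PiE_iff extensional_def)
  ultimately show ?thesis by (auto simp: bounded_exps_def PiE_iff)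
qed

lemma bounded_exps_nonbasis_less: "\<gamma> \<in> bounded_exps X \<Longrightarrow> j < N \<Longrightarrow> j \<notin> J \<Longrightarrow> \<gamma> j < e j"
  using PiE_mem[of \<gamma> "{..<N}" "\<lambda>i. if i \<in> J then {..X} else {..<e i}" j] by (simp add: bounded_exps_def)

lemma bounded_exps_basis_le: "\<gamma> \<in> bounded_exps X \<Longrightarrow> j \<in> J \<Longrightarrow> \<gamma> j \<le> X"
  using PiE_mem[of \<gamma> "{..<N}" "\<lambda>i. if i \<in> J then {..X} else {..<e i}" j] J_subset by (auto simp: bounded_exps_def)

lemma raises_level_mono: "raises_level p a \<Longrightarrow> a \<le> b \<Longrightarrow> raises_level p b"
  unfolding raises_level_def
proof (intro allI ballI)
  fix X w assume h: "\<forall>X. \<forall>w\<in>level_span X. p * w \<in> level_span (X + a)" and ab: "a \<le> b" and w: "w \<in> level_span X"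
  have "p * w \<in> level_span (X + a)" using h w by blast
  then show "p * w \<in> level_span (X + b)" using level_span_mono[of "X + a" "X + b"] ab by auto
qed

lemma raises_level_const: "\<kappa> \<in> K \<Longrightarrow> raises_level (mconst \<kappa>) 0"
  unfolding raises_level_def level_span_def using kspan_scale[OF K] by auto

lemma raises_level_1: "raises_level 1 0"
  using raises_level_const[OF subfield_1[OF K]] by simp

lemma raises_level_add: "raises_level p a \<Longrightarrow> raises_level q a \<Longrightarrow> raises_level (p + q) a"
  unfolding raises_level_def level_span_def by (auto simp: distrib_right intro!: kspan_add[OF K])

lemma raises_level_mult: "raises_level p a \<Longrightarrow> raises_level q b \<Longrightarrow> raises_level (p * q) (a + b)"
  unfolding raises_level_def
proof (intro allI ballI)
  fix X w assume hp: "\<forall>X. \<forall>w\<in>level_span X. p * w \<in> level_span (X + a)" and hq: "\<forall>X. \<forall>w\<in>level_span X. q * w \<in> level_span (X + b)"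
    and w: "w \<in> level_span X"
  have "q * w \<in> level_span (X + b)" using hq w by blast
  then have "p * (q * w) \<in> level_span (X + b + a)" using hp by blast
  then show "p * q * w \<in> level_span (X + (a + b))" by (simp add: mult.assoc add_ac)
qed

lemma raises_level_power: "raises_level p a \<Longrightarrow> raises_level (p ^ d) (a * d)"
proof (induction d)
  case 0 then show ?case using raises_level_1 by simp
next
  case (Suc d)
  then have "raises_level (p * p ^ d) (a + a * d)" using raises_level_mult by blast
  then show ?case by simp
qed

lemma raises_level_prod: "(\<And>i. i \<in> F \<Longrightarrow> raises_level (f i) (a i)) \<Longrightarrow> raises_level (prod f F) (sum a F)"
proof (induction F rule: infinite_finite_induct)
  case (infinite A) then show ?case using raises_level_1 by simp
next
  case empty then show ?case using raises_level_1 by simp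
next
  case (insert x F) then show ?case by (simp add: raises_level_mult)
qed

lemma raises_level_if_gmonom:
  assumes "\<And>X \<gamma>. \<gamma> \<in> bounded_exps X \<Longrightarrow> p * gmonom \<gamma> \<in> level_span (X + a)"
  shows "raises_level p a"
  unfolding raises_level_def
proof (intro allI ballI)
  fix X w assume w: "w \<in> level_span X"
  have "p * b \<in> kspan K (gmonom ` bounded_exps (X + a))" if "b \<in> gmonom ` bounded_exps X" for b
    using assms that unfolding level_span_def by auto
  then show "p * w \<in> level_span (X + a)"
    using kspan_mult_into[OF K _ _ w[unfolded level_span_def]]
    unfolding level_span_def by (simp add: finite_bounded_exps)
qed

lemma raises_level_basis_var:
  assumes j: "j \<in> J"
  shows "raises_level (g j) 1"
proof (rule raises_level_if_gmonom)
  fix X \<gamma> assume \<gamma>: "\<gamma> \<in> bounded_exps X"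
  have jN: "j < N"
    using j J_subset by auto
  have "g j * gmonom \<gamma> = gmonom (\<gamma>(j := \<gamma> j + 1))"
    using jN by (simp add: gmonom_split[of j \<gamma>] gmonom_upd)
  moreover have "\<gamma>(j := \<gamma> j + 1) \<in> bounded_exps (X + 1)"
    using bounded_exps_upd[OF \<gamma> jN] bounded_exps_basis_le[OF \<gamma> j] j by auto
  ultimately show "g j * gmonom \<gamma> \<in> level_span (X + 1)"
    using gmonom_in_level_span by simp
qed

lemma subalg_gen_raises_level:
  assumes "x \<in> subalg_gen K g J"
  shows "\<exists>a. raises_level x a"
proof -
  obtain p where p: "coeffs_in K p" "mvars p \<subseteq> J" "x = msubst p g"
    using assms by (auto simp: subalg_gen_def)
  have "\<exists>a. raises_level (msubst p g) a"
    using K p(1,2)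
  proof (induction p rule: coeffs_in_induct)
    case (const c)
    then show ?case using raises_level_const by auto
  next
    case (var i)
    then show ?case using raises_level_basis_var by auto
  next
    case (add p q)
    then obtain a b where "raises_level (msubst p g) a" "raises_level (msubst q g) b"
      by auto
    then show ?case
      by (intro exI[of _ "max a b"]) (auto simp: msubst_add intro!: raises_level_add elim: raises_level_mono)
  next
    case (mult p q)
    then obtain a b where "raises_level (msubst p g) a" "raises_level (msubst q g) b"
      by auto
    then show ?case
      by (intro exI[of _ "a + b"]) (simp add: msubst_mult raises_level_mult)
  qed
  then show ?thesis
    using p(3) by simp
qed

lemma ex_uniform_level_coeffs:
  assumes "j < N" "j \<notin> J"
  shows "\<exists>a. \<forall>l<e j. raises_level (r j l) a"
  using ex_uniform_bound[of "{..<e j}" "\<lambda>l a. raises_level (r j l) a"] subalg_gen_raises_level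
    coeff_in_subalg[OF assms] raises_level_mono
  by blast

definition lead_prod :: "'a mpoly" where
  "lead_prod = (\<Prod>j\<in>{..<N}-J. c j)"

lemma lead_prod_subalg_gen: "lead_prod \<in> subalg_gen K g J"
  unfolding lead_prod_def by (rule subalg_gen_prod[OF K]) (auto intro: lead_in_subalg)

lemma lead_prod_nonzero: "lead_prod \<noteq> 0"
  unfolding lead_prod_def using lead_nonzero by (auto simp: prod_zero_iff)

lemma lead_prod_factor:
  assumes "j < N" "j \<notin> J"
  obtains q where "lead_prod = c j * q" "q \<in> subalg_gen K g J"
proof
  show "lead_prod = c j * (\<Prod>i\<in>{..<N}-J-{j}. c i)"
    unfolding lead_prod_def using assms by (subst prod.remove[of _ j]) auto
  show "(\<Prod>i\<in>{..<N}-J-{j}. c i) \<in> subalg_gen K g J"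
    by (rule subalg_gen_prod[OF K]) (auto intro: lead_in_subalg)
qed

lemma lead_mult_gmonom_reduce:
  assumes j: "j < N" "j \<notin> J" and top: "e j = \<gamma> j + 1"
  shows "c j * (g j * gmonom \<gamma>) = (\<Sum>l<e j. r j l * gmonom (\<gamma>(j := l)))"
proof -
  have "c j * (g j * gmonom \<gamma>) = c j * g j ^ e j * gmonom_except \<gamma> j"
    using j(1) by (simp add: gmonom_split[of j \<gamma>] top mult_ac)
  also have "\<dots> = (\<Sum>l<e j. r j l * gmonom (\<gamma>(j := l)))"
    by (simp add: alg_relation[OF j] gmonom_upd[OF j(1)] sum_distrib_left sum_distrib_right mult_ac)
  finally show ?thesis .
qed

lemma raises_level_lead_prod_mult_nonbasis:
  assumes j: "j < N" "j \<notin> J"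
  shows "\<exists>a. raises_level (lead_prod * g j) a"
proof -
  obtain q where q: "lead_prod = c j * q" "q \<in> subalg_gen K g J"
    using lead_prod_factor[OF j] .
  obtain a0 a1 a2 where a0: "raises_level lead_prod a0" and a1: "raises_level q a1"
    and a2: "\<forall>l<e j. raises_level (r j l) a2"
    using subalg_gen_raises_level[OF lead_prod_subalg_gen] subalg_gen_raises_level[OF q(2)]
      ex_uniform_level_coeffs[OF j] by blast
  have "lead_prod * g j * gmonom \<gamma> \<in> level_span (X + (a0 + a1 + a2))"
    if \<gamma>: "\<gamma> \<in> bounded_exps X" for X \<gamma>
  proof (cases "\<gamma> j + 1 < e j")
    case True
    have "g j * gmonom \<gamma> = gmonom (\<gamma>(j := \<gamma> j + 1))"
      using j(1) by (simp add: gmonom_split[of j \<gamma>] gmonom_upd)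
    moreover have "\<gamma>(j := \<gamma> j + 1) \<in> bounded_exps X"
      using bounded_exps_upd[OF \<gamma> j(1), of "\<gamma> j + 1" X] True j(2) by auto
    ultimately have "lead_prod * (g j * gmonom \<gamma>) \<in> level_span (X + a0)"
      using a0 gmonom_in_level_span unfolding raises_level_def by simp
    then show ?thesis
      using level_span_mono[of "X + a0" "X + (a0 + a1 + a2)"] by (auto simp: mult.assoc)
  next
    case False
    then have top: "e j = \<gamma> j + 1"
      using bounded_exps_nonbasis_less[OF \<gamma> j] by simp
    have "r j l * gmonom (\<gamma>(j := l)) \<in> level_span (X + a2)" if "l < e j" for l
      using bounded_exps_upd[OF \<gamma> j(1), of l X] that j(2) a2 gmonom_in_level_span
      unfolding raises_level_def by auto
    then have "(\<Sum>l<e j. r j l * gmonom (\<gamma>(j := l))) \<in> level_span (X + a2)"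
      unfolding level_span_def by (intro kspan_sum[OF K]) auto
    then have "q * (c j * (g j * gmonom \<gamma>)) \<in> level_span (X + a2 + a1)"
      using a1 lead_mult_gmonom_reduce[where \<gamma> = \<gamma>, OF j top] unfolding raises_level_def by simp
    then show ?thesis
      using level_span_mono[of "X + a2 + a1" "X + (a0 + a1 + a2)"] q(1) by (auto simp: mult_ac)
  qed
  then show ?thesis
    by (blast intro: raises_level_if_gmonom)
qed

lemma ex_uniform_level_lead_prod:
  "\<exists>A. raises_level lead_prod A \<and> (\<forall>j<N. raises_level (lead_prod * g j) A)"
proof -
  obtain a0 where a0: "raises_level lead_prod a0"
    using subalg_gen_raises_level[OF lead_prod_subalg_gen] by blast
  have "\<exists>a. raises_level (lead_prod * g j) a" if "j \<in> {..<N}" for j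
    using raises_level_mult[OF a0 raises_level_basis_var] raises_level_lead_prod_mult_nonbasis that
    by (cases "j \<in> J") auto
  then obtain a where a: "\<forall>j\<in>{..<N}. raises_level (lead_prod * g j) a"
    using ex_uniform_bound[of "{..<N}" "\<lambda>j a. raises_level (lead_prod * g j) a"] raises_level_mono
    by blast
  have "raises_level (lead_prod * g j) (max a a0)" if "j < N" for j
    using a that raises_level_mono[of "lead_prod * g j" a "max a a0"] by simp
  moreover have "raises_level lead_prod (max a a0)"
    using a0 raises_level_mono[of lead_prod a0 "max a a0"] by simp
  ultimately show ?thesis
    by blast
qed

lemma raises_level_lead_prod_power_mono:
  assumes "raises_level (lead_prod ^ E * x) (A * E)" "raises_level lead_prod A" "E \<le> E'"
  shows "raises_level (lead_prod ^ E' * x) (A * E')"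
proof -
  have "raises_level (lead_prod ^ (E' - E) * (lead_prod ^ E * x)) (A * (E' - E) + A * E)"
    by (rule raises_level_mult[OF raises_level_power[OF assms(2)] assms(1)])
  moreover have "lead_prod ^ (E' - E) * (lead_prod ^ E * x) = lead_prod ^ E' * x"
    using assms(3) by (simp add: mult.assoc[symmetric] power_add[symmetric])
  moreover have "A * (E' - E) + A * E = A * E'"
    using assms(3) by (simp add: diff_mult_distrib2)
  ultimately show ?thesis
    by simp
qed

lemma raises_level_lead_prod_power_msubst:
  assumes A: "raises_level lead_prod A" "\<And>j. j < N \<Longrightarrow> raises_level (lead_prod * g j) A"
    and p: "coeffs_in K p" "mvars p \<subseteq> {..<N}"
  shows "\<exists>E. raises_level (lead_prod ^ E * msubst p g) (A * E)"
  using K p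
proof (induction p rule: coeffs_in_induct)
  case (const c)
  then show ?case using raises_level_const by (intro exI[of _ 0]) simp
next
  case (var i)
  then show ?case using A(2)[of i] by (intro exI[of _ 1]) simp
next
  case (add p q)
  then obtain E1 E2 where "raises_level (lead_prod ^ E1 * msubst p g) (A * E1)"
    "raises_level (lead_prod ^ E2 * msubst q g) (A * E2)"
    by auto
  then have "raises_level (lead_prod ^ max E1 E2 * msubst p g) (A * max E1 E2)"
    "raises_level (lead_prod ^ max E1 E2 * msubst q g) (A * max E1 E2)"
    by (auto intro: raises_level_lead_prod_power_mono[OF _ A(1)])
  then show ?case
    by (intro exI[of _ "max E1 E2"]) (simp add: msubst_add distrib_left raises_level_add)
next
  case (mult p q)
  then obtain E1 E2 where "raises_level (lead_prod ^ E1 * msubst p g) (A * E1)"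
    "raises_level (lead_prod ^ E2 * msubst q g) (A * E2)"
    by auto
  then have "raises_level ((lead_prod ^ E1 * msubst p g) * (lead_prod ^ E2 * msubst q g)) (A * E1 + A * E2)"
    by (rule raises_level_mult)
  then show ?case
    by (intro exI[of _ "E1 + E2"]) (simp add: msubst_mult power_add mult_ac distrib_left)
qed

lemma raises_level_gen_alg:
  fixes k :: nat
  assumes u: "\<forall>i<k. u i \<in> gen_alg K N g"
  obtains A E where "raises_level lead_prod A" "\<forall>i<k. raises_level (lead_prod ^ E * u i) (A * E)"
proof -
  obtain A where A: "raises_level lead_prod A" "\<And>j. j < N \<Longrightarrow> raises_level (lead_prod * g j) A"
    using ex_uniform_level_lead_prod by blast
  have "\<exists>E. raises_level (lead_prod ^ E * u i) (A * E)" if i: "i \<in> {..<k}" for i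
  proof -
    obtain p where "coeffs_in K p" "mvars p \<subseteq> {..<N}" "u i = msubst p g"
      using u i by (auto simp: gen_alg_def poly_over_iff[OF K])
    then show ?thesis
      using raises_level_lead_prod_power_msubst[OF A] by simp
  qed
  then have "\<exists>E. \<forall>i\<in>{..<k}. raises_level (lead_prod ^ E * u i) (A * E)"
    by (intro ex_uniform_bound) (auto intro: raises_level_lead_prod_power_mono[OF _ A(1)])
  then show thesis
    using that[OF A(1)] by auto
qed

lemma power_products_in_level_span:
  fixes k :: nat
  assumes A: "raises_level lead_prod A" and E: "\<forall>i<k. raises_level (lead_prod ^ E * u i) (A * E)"
    and \<delta>: "\<delta> \<in> PiE {..<k} (\<lambda>_. {..D})"
  shows "lead_prod ^ (E * k * D) * (\<Prod>i<k. u i ^ \<delta> i) \<in> level_span (A * E * k * D)"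
proof -
  define t where "t = (\<Sum>i<k. \<delta> i)"
  have t: "t \<le> k * D"
  proof -
    have "t \<le> (\<Sum>i<k. D)"
      unfolding t_def by (rule sum_mono) (use \<delta> in \<open>auto simp: PiE_iff\<close>)
    then show ?thesis by simp
  qed
  have "raises_level (\<Prod>i<k. (lead_prod ^ E * u i) ^ \<delta> i) (\<Sum>i<k. A * E * \<delta> i)"
    by (rule raises_level_prod) (use E raises_level_power in auto)
  moreover have "(\<Prod>i<k. (lead_prod ^ E * u i) ^ \<delta> i) = lead_prod ^ (E * t) * (\<Prod>i<k. u i ^ \<delta> i)"
    by (simp add: t_def power_mult_distrib prod.distrib power_mult[symmetric] power_sum sum_distrib_left)
  moreover have "(\<Sum>i<k. A * E * \<delta> i) = A * E * t"
    by (simp add: t_def sum_distrib_left)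
  ultimately have "raises_level (lead_prod ^ (E * t) * (\<Prod>i<k. u i ^ \<delta> i)) (A * E * t)"
    by simp
  with raises_level_power[OF A, of "E * (k * D - t)"]
  have "raises_level (lead_prod ^ (E * (k * D - t)) * (lead_prod ^ (E * t) * (\<Prod>i<k. u i ^ \<delta> i)))
      (A * (E * (k * D - t)) + A * E * t)"
    by (rule raises_level_mult)
  moreover have "lead_prod ^ (E * (k * D - t)) * (lead_prod ^ (E * t) * (\<Prod>i<k. u i ^ \<delta> i))
      = lead_prod ^ (E * k * D) * (\<Prod>i<k. u i ^ \<delta> i)"
    using t by (simp add: mult.assoc[symmetric] power_add[symmetric] diff_mult_distrib2[symmetric]
        add_mult_distrib2[symmetric])
  moreover have "A * (E * (k * D - t)) + A * E * t = A * E * k * D"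
  proof -
    have "A * (E * (k * D - t)) + A * E * t = A * E * ((k * D - t) + t)"
      by (simp only: add_mult_distrib2 mult.assoc)
    then show ?thesis using t by simp
  qed
  ultimately have "raises_level (lead_prod ^ (E * k * D) * (\<Prod>i<k. u i ^ \<delta> i)) (A * E * k * D)"
    by simp
  then show ?thesis
    using one_in_level_span unfolding raises_level_def by fastforce
qed

lemma card_bounded_exps: "card (bounded_exps X) = (X + 1) ^ card J * (\<Prod>i\<in>{..<N}-J. e i)"
proof -
  have "card (bounded_exps X) = (\<Prod>i<N. card (if i \<in> J then {..X} else {..<e i}))"
    by (simp add: bounded_exps_def card_PiE)
  also have "\<dots> = (\<Prod>i<N. if i \<in> J then X + 1 else e i)"
    by (rule prod.cong) auto
  also have "\<dots> = (\<Prod>i\<in>{..<N}-J. if i \<in> J then X + 1 else e i) * (\<Prod>i\<in>J. if i \<in> J then X + 1 else e i)"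
    by (rule prod.subset_diff[OF J_subset]) simp
  also have "\<dots> = (X + 1) ^ card J * (\<Prod>i\<in>{..<N}-J. e i)"
    by simp
  finally show ?thesis .
qed

lemma not_alg_indep_if_card_gt:
  assumes kJ: "card J < k" and u: "\<forall>i<k. u i \<in> gen_alg K N g"
  shows "\<not> alg_indep K k u"
proof -
  obtain A E where A: "raises_level lead_prod A"
    and E: "\<forall>i<k. raises_level (lead_prod ^ E * u i) (A * E)"
    using raises_level_gen_alg[OF u] .
  define M where "M = A * E * k"
  define P where "P = (\<Prod>i\<in>{..<N}-J. e i)"
  define D where "D = (M + 1) ^ card J * P"
  define B where "B = gmonom ` bounded_exps (M * D)"
  define \<Delta> where "\<Delta> = PiE {..<k} (\<lambda>_. {..D})"
  define x where "x \<delta> = lead_prod ^ (E * k * D) * (\<Prod>i<k. u i ^ \<delta> i)" for \<delta>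
  have P: "1 \<le> P"
    unfolding P_def by (rule prod_ge_1) (use degree_pos in auto)
  have fin: "finite B" "finite \<Delta>"
    by (simp_all add: B_def \<Delta>_def finite_bounded_exps finite_PiE)
  have "card B \<le> card (bounded_exps (M * D))"
    unfolding B_def by (rule card_image_le[OF finite_bounded_exps])
  also have "\<dots> = (M * D + 1) ^ card J * P"
    by (simp add: card_bounded_exps P_def)
  also have "\<dots> < (D + 1) ^ k"
    unfolding D_def by (rule power_count_lt[OF kJ P])
  also have "\<dots> = card \<Delta>"
    by (simp add: \<Delta>_def card_PiE)
  finally have card: "card B < card \<Delta>" .
  have "x \<delta> \<in> kspan K B" if "\<delta> \<in> \<Delta>" for \<delta>
  proof -
    have "x \<delta> \<in> level_span (A * E * k * D)"
      unfolding x_def by (rule power_products_in_level_span[OF A E that[unfolded \<Delta>_def]])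
    then show ?thesis
      by (simp add: level_span_def B_def M_def)
  qed
  then obtain \<kappa> where \<kappa>: "\<forall>\<delta>\<in>\<Delta>. \<kappa> \<delta> \<in> K" "\<exists>\<delta>\<in>\<Delta>. \<kappa> \<delta> \<noteq> 0"
      "(\<Sum>\<delta>\<in>\<Delta>. mconst (\<kappa> \<delta>) * x \<delta>) = 0"
    using kspan_linear_dependent[OF K fin card] by blast
  have "lead_prod ^ (E * k * D) * (\<Sum>\<delta>\<in>\<Delta>. mconst (\<kappa> \<delta>) * (\<Prod>i<k. u i ^ \<delta> i))
      = (\<Sum>\<delta>\<in>\<Delta>. mconst (\<kappa> \<delta>) * x \<delta>)"
    unfolding sum_distrib_left by (rule sum.cong) (simp_all add: x_def mult.left_commute)
  then have "(\<Sum>\<delta>\<in>\<Delta>. mconst (\<kappa> \<delta>) * (\<Prod>i<k. u i ^ \<delta> i)) = 0"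
    using \<kappa>(3) lead_prod_nonzero by (simp del: mconst_eq_0_iff)
  moreover have "\<Delta> \<subseteq> extensional {..<k}"
    by (simp add: \<Delta>_def PiE_iff subset_iff)
  ultimately show ?thesis
    using not_alg_indep_if_power_products_dependent[OF K fin(2) _ \<kappa>(1,2)] by blast
qed

end

subsection \<open>Transcendence degree via maximal independent subfamilies\<close>

definition alg_indep_on :: "'a::field set \<Rightarrow> (nat \<Rightarrow> 'a mpoly) \<Rightarrow> nat set \<Rightarrow> bool" where
  "alg_indep_on K g J \<longleftrightarrow> (\<forall>f. coeffs_in K f \<longrightarrow> mvars f \<subseteq> J \<longrightarrow> msubst f g = 0 \<longrightarrow> f = 0)"

lemma alg_indep_on_subset: "alg_indep_on K g J' \<Longrightarrow> J \<subseteq> J' \<Longrightarrow> alg_indep_on K g J"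
  unfolding alg_indep_on_def by blast

lemma alg_indep_iff_alg_indep_on: "subfield K \<Longrightarrow> alg_indep K k u \<longleftrightarrow> alg_indep_on K u {..<k}"
  by (auto simp: alg_indep_def alg_indep_on_def poly_over_iff)

lemma alg_indep_on_reindex:
  assumes K: "subfield K" and inv: "\<And>i. i \<in> J \<Longrightarrow> \<psi> (\<phi> i) = i"
  shows "alg_indep_on K (\<lambda>i. g (\<phi> i)) J \<longleftrightarrow> alg_indep_on K g (\<phi> ` J)"
proof
  assume indep: "alg_indep_on K (\<lambda>i. g (\<phi> i)) J"
  show "alg_indep_on K g (\<phi> ` J)"
    unfolding alg_indep_on_def
  proof (intro allI impI)
    fix f assume f: "coeffs_in K f" "mvars f \<subseteq> \<phi> ` J" "msubst f g = 0"
    have f_eq: "mrename \<phi> (mrename \<psi> f) = f"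
      by (rule mrename_inverse) (use f(2) inv in auto)
    have "mvars (mrename \<psi> f) \<subseteq> J"
      using mvars_mrename[of \<psi> f] f(2) inv by fastforce
    moreover have "msubst (mrename \<psi> f) (\<lambda>i. g (\<phi> i)) = 0"
      using f(3) f_eq by (metis msubst_mrename)
    ultimately have "mrename \<psi> f = 0"
      using indep coeffs_in_mrename[OF K f(1)] unfolding alg_indep_on_def by blast
    then show "f = 0"
      using f_eq by (simp add: mrename_def)
  qed
next
  assume indep: "alg_indep_on K g (\<phi> ` J)"
  show "alg_indep_on K (\<lambda>i. g (\<phi> i)) J"
    unfolding alg_indep_on_def
  proof (intro allI impI)
    fix f assume f: "coeffs_in K f" "mvars f \<subseteq> J" "msubst f (\<lambda>i. g (\<phi> i)) = 0"
    have "mvars (mrename \<phi> f) \<subseteq> \<phi> ` J"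
      using mvars_mrename[of \<phi> f] f(2) by blast
    moreover have "msubst (mrename \<phi> f) g = 0"
      using f(3) by simp
    ultimately have "mrename \<phi> f = 0"
      using indep coeffs_in_mrename[OF K f(1)] unfolding alg_indep_on_def by blast
    moreover have "mrename \<psi> (mrename \<phi> f) = f"
      by (rule mrename_inverse) (use f(2) inv in auto)
    ultimately show "f = 0"
      by (simp add: mrename_def)
  qed
qed

lemma alg_indep_on_shift:
  "subfield K \<Longrightarrow> alg_indep_on K (\<lambda>i. g (i + s)) J \<longleftrightarrow> alg_indep_on K g ((\<lambda>i. i + s) ` J)"
  by (rule alg_indep_on_reindex[where \<psi> = "\<lambda>i. i - s"]) simp_all

lemma alg_indep_on_union_unit_apices:
  assumes K: "subfield K" and H: "poly_tuple n m H" and s: "s \<le> m"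
    and apex: "\<forall>j<s. proj_image_apex K n m H (unit_vec j)"
    and W: "W \<subseteq> {..<m}" and indep: "alg_indep_on K H W"
  shows "alg_indep_on K H ({..<s} \<union> W)"
  unfolding alg_indep_on_def
proof (intro allI impI)
  fix f assume f: "coeffs_in K f" "mvars f \<subseteq> {..<s} \<union> W" "msubst f H = 0"
  have "f \<in> poly_over K m"
    using f(1,2) s W by (auto simp: poly_over_iff[OF K])
  then have vanish: "msubst f (override_on H T {..<s}) = 0" for T
    using apex f(3) by (intro relation_override_unit_apices[OF K H]) auto
  have "msubst g mvar = 0" if "coeffs_in K g" "mvars g \<subseteq> W" "msubst g H = 0" for g
    using indep that unfolding alg_indep_on_def by simp
  then have "msubst f (override_on mvar mvar {..<s}) = 0"
    by (rule relation_transfer_override[OF K _ _ f(1,2) vanish]) auto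
  then show "f = 0"
    by (simp add: override_on_def)
qed

lemma ex_maximal_alg_indep_on:
  obtains J where "J \<subseteq> {..<N}" "alg_indep_on K g J"
    "\<And>j. j < N \<Longrightarrow> j \<notin> J \<Longrightarrow> \<not> alg_indep_on K g (insert j J)"
proof -
  define Fam where "Fam = {J. J \<subseteq> {..<N} \<and> alg_indep_on K g J}"
  have "{} \<in> Fam"
    by (auto simp: Fam_def alg_indep_on_def msubst_eq_self_if_no_mvars)
  moreover have "finite Fam"
    by (rule finite_subset[of _ "Pow {..<N}"]) (auto simp: Fam_def)
  ultimately have "Max (card ` Fam) \<in> card ` Fam"
    by (intro Max_in) auto
  then obtain J where J: "J \<in> Fam" "card J = Max (card ` Fam)"
    by auto
  have max: "card J' \<le> card J" if "J' \<in> Fam" for J'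
    using \<open>finite Fam\<close> that J(2) by simp
  have "\<not> alg_indep_on K g (insert j J)" if "j < N" "j \<notin> J" for j
  proof
    assume "alg_indep_on K g (insert j J)"
    then have "card (insert j J) \<le> card J"
      using J(1) that by (intro max) (auto simp: Fam_def)
    moreover have "finite J"
      using J(1) by (auto simp: Fam_def finite_subset)
    ultimately show False
      using that(2) by simp
  qed
  then show thesis
    using J(1) that by (auto simp: Fam_def)
qed

lemma algebraic_relation_over_alg_indep_on:
  assumes K: "subfield K" and indep: "alg_indep_on K g J"
    and f: "coeffs_in K f" "mvars f \<subseteq> insert j J" "msubst f g = 0" "f \<noteq> 0"
  obtains e c r where "1 \<le> e" "c \<in> subalg_gen K g J" "c \<noteq> 0" "\<And>l. r l \<in> subalg_gen K g J"
    "c * g j ^ e = (\<Sum>l<e. g j ^ l * r l)"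
proof -
  obtain E fe where E: "finite E" and dec: "f = (\<Sum>e\<in>E. mvar j ^ e * fe e)"
    and j: "\<And>e. j \<notin> mvars (fe e)" and fe: "\<And>e. mvars (fe e) \<subseteq> mvars f"
    and fe_coeffs: "\<And>K e. subfield K \<Longrightarrow> coeffs_in K f \<Longrightarrow> coeffs_in K (fe e)"
    by (rule mpoly_expand_var[of f j]) blast
  have fe_K: "coeffs_in K (fe e)" and fe_J: "mvars (fe e) \<subseteq> J" for e
    using fe_coeffs[OF K f(1)] fe[of e] j[of e] f(2) by auto
  define E' where "E' = {e\<in>E. fe e \<noteq> 0}"
  have "finite E'"
    using E by (simp add: E'_def)
  moreover have "E' \<noteq> {}"
  proof
    assume "E' = {}"
    then have "f = 0"
      using dec by (auto simp: E'_def)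
    then show False
      using f(4) by simp
  qed
  ultimately have "Max E' \<in> E'" "\<And>e. e \<in> E' \<Longrightarrow> e \<le> Max E'"
    by simp_all
  then obtain t where t: "t \<in> E" "fe t \<noteq> 0" and above: "\<And>e. e \<in> E \<Longrightarrow> t < e \<Longrightarrow> fe e = 0"
    unfolding E'_def by (metis (mono_tags, lifting) leD mem_Collect_eq)
  define r where "r l = (if l \<in> E then - msubst (fe l) g else 0)" for l
  have rel: "msubst (fe t) g * g j ^ t = (\<Sum>l<t. g j ^ l * r l)"
    unfolding r_def using f(3) msubst_expand_var[OF dec, of g] above
    by (intro sum_powers_eq_0_lead_term[OF E _ t(1)]) auto
  have lead: "msubst (fe t) g \<noteq> 0"
    using indep fe_K fe_J t(2) unfolding alg_indep_on_def by blast
  have "r l \<in> subalg_gen K g J" for l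
    using coeffs_in_uminus[OF K fe_K] coeffs_in_0[OF K] fe_J[of l]
    unfolding r_def subalg_gen_def by (force simp: msubst_minus[symmetric] mvars_def)
  moreover have "1 \<le> t"
    using rel lead by (cases t) auto
  ultimately show thesis
    using that rel lead fe_K fe_J unfolding subalg_gen_def by blast
qed

lemma alg_indep_le_card_maximal_alg_indep_on:
  assumes K: "subfield K" and J: "J \<subseteq> {..<N}" and indep: "alg_indep_on K g J"
    and maximal: "\<And>j. j < N \<Longrightarrow> j \<notin> J \<Longrightarrow> \<not> alg_indep_on K g (insert j J)"
    and u: "\<forall>i<k. u i \<in> gen_alg K N g" "alg_indep K k u"
  shows "k \<le> card J"
proof -
  define R where "R j e c r \<longleftrightarrow> 1 \<le> e \<and> c \<in> subalg_gen K g J \<and> c \<noteq> 0 \<and>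
      (\<forall>l. r l \<in> subalg_gen K g J) \<and> c * g j ^ e = (\<Sum>l<e. g j ^ l * r l)"
    for j e c and r :: "nat \<Rightarrow> 'a mpoly"
  have "\<forall>j. \<exists>e c r. j < N \<longrightarrow> j \<notin> J \<longrightarrow> R j e c r"
  proof (intro allI impI)
    fix j
    show "\<exists>e c r. j < N \<longrightarrow> j \<notin> J \<longrightarrow> R j e c r"
    proof (cases "j < N \<and> j \<notin> J")
      case True
      then obtain f where "coeffs_in K f" "mvars f \<subseteq> insert j J" "msubst f g = 0" "f \<noteq> 0"
        using maximal unfolding alg_indep_on_def by blast
      then show ?thesis
        by (rule algebraic_relation_over_alg_indep_on[OF K indep]) (auto simp: R_def)
    qed blast
  qed
  then obtain e where "\<forall>j. \<exists>c r. j < N \<longrightarrow> j \<notin> J \<longrightarrow> R j (e j) c r"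
    by (rule choice[THEN exE])
  then obtain c where "\<forall>j. \<exists>r. j < N \<longrightarrow> j \<notin> J \<longrightarrow> R j (e j) (c j) r"
    by (rule choice[THEN exE])
  then obtain r where "\<forall>j. j < N \<longrightarrow> j \<notin> J \<longrightarrow> R j (e j) (c j) (r j)"
    by (rule choice[THEN exE])
  then interpret algebraic_over_subfamily K g N J e c r
    using K J by unfold_locales (auto simp: R_def)
  show ?thesis
    using not_alg_indep_if_card_gt[of k u] u by (meson not_le)
qed

lemma ex_alg_indep_card_alg_indep_on:
  assumes K: "subfield K" and J: "J \<subseteq> {..<N}" and indep: "alg_indep_on K g J"
  shows "\<exists>u. (\<forall>i<card J. u i \<in> gen_alg K N g) \<and> alg_indep K (card J) u"
proof -
  have "finite J"
    using J finite_lessThan by (rule finite_subset)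
  then obtain \<phi> where \<phi>: "bij_betw \<phi> {..<card J} J"
    by (metis ex_bij_betw_nat_finite atLeast0LessThan)
  have "g (\<phi> i) \<in> gen_alg K N g" if "i < card J" for i
  proof -
    have "\<phi> i < N"
      using bij_betwE[OF \<phi>] that J by blast
    then have "mvar (\<phi> i) \<in> poly_over K N"
      using mvars_mvar[of "\<phi> i"] by (auto simp: poly_over_iff[OF K] coeffs_in_mvar[OF K])
    moreover have "g (\<phi> i) = msubst (mvar (\<phi> i)) g"
      by simp
    ultimately show ?thesis
      unfolding gen_alg_def by blast
  qed
  moreover have "alg_indep_on K (\<lambda>i. g (\<phi> i)) {..<card J}"
  proof (subst alg_indep_on_reindex[OF K])
    show "the_inv_into {..<card J} \<phi> (\<phi> i) = i" if "i \<in> {..<card J}" for i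
      using bij_betw_imp_inj_on[OF \<phi>] that by (rule the_inv_into_f_f)
    show "alg_indep_on K g (\<phi> ` {..<card J})"
      unfolding bij_betw_imp_surj_on[OF \<phi>] by (rule indep)
  qed
  then have "alg_indep K (card J) (\<lambda>i. g (\<phi> i))"
    by (simp add: alg_indep_iff_alg_indep_on[OF K])
  ultimately show ?thesis
    by (intro exI[of _ "\<lambda>i. g (\<phi> i)"]) simp
qed

lemma trdeg_eq_card_maximal_alg_indep_on:
  assumes K: "subfield K" and J: "J \<subseteq> {..<N}" and indep: "alg_indep_on K g J"
    and maximal: "\<And>j. j < N \<Longrightarrow> j \<notin> J \<Longrightarrow> \<not> alg_indep_on K g (insert j J)"
  shows "trdeg K N g = card J"
proof -
  define S where "S = {k. \<exists>u. (\<forall>i<k. u i \<in> gen_alg K N g) \<and> alg_indep K k u}"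
  have le: "k \<le> card J" if "k \<in> S" for k
    using that alg_indep_le_card_maximal_alg_indep_on[OF K J indep maximal] unfolding S_def by blast
  moreover have "card J \<in> S"
    unfolding S_def using ex_alg_indep_card_alg_indep_on[OF K J indep] by blast
  moreover have "finite S"
    by (rule finite_subset[of _ "{..card J}"]) (use le in auto)
  ultimately have "Max S = card J"
    by (intro Max_eqI) auto
  then show ?thesis
    by (simp add: trdeg_def S_def)
qed

lemma trdeg_drop_unit_apices:
  assumes K: "subfield K" and H: "poly_tuple n m H" and s: "s \<le> m"
    and apex: "\<forall>j<s. proj_image_apex K n m H (unit_vec j)"
  shows "trdeg K m H = trdeg K (m - s) (\<lambda>i. H (i + s)) + s"
proof -
  obtain J' where J': "J' \<subseteq> {..<m - s}" "alg_indep_on K (\<lambda>i. H (i + s)) J'"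
    and maximal': "\<And>j. j < m - s \<Longrightarrow> j \<notin> J' \<Longrightarrow> \<not> alg_indep_on K (\<lambda>i. H (i + s)) (insert j J')"
    using ex_maximal_alg_indep_on[where N = "m - s" and K = K and g = "\<lambda>i. H (i + s)"] by blast
  define J where "J = {..<s} \<union> (\<lambda>i. i + s) ` J'"
  have J: "J \<subseteq> {..<m}"
    using J'(1) s by (auto simp: J_def)
  have indep: "alg_indep_on K H J"
    unfolding J_def using J'(1) J'(2)[unfolded alg_indep_on_shift[OF K]]
    by (intro alg_indep_on_union_unit_apices[OF K H s apex]) auto
  have maximal: "\<not> alg_indep_on K H (insert j J)" if j: "j < m" "j \<notin> J" for j
  proof
    have js: "s \<le> j" "j - s + s = j"
      using j(2) by (auto simp: J_def)
    assume "alg_indep_on K H (insert j J)"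
    moreover have "(\<lambda>i. i + s) ` insert (j - s) J' \<subseteq> insert j J"
      using js by (auto simp: J_def)
    ultimately have "alg_indep_on K (\<lambda>i. H (i + s)) (insert (j - s) J')"
      unfolding alg_indep_on_shift[OF K] by (rule alg_indep_on_subset)
    moreover have "j - s < m - s" "j - s \<notin> J'"
      using j js by (auto simp: J_def) (metis image_eqI)
    ultimately show False
      using maximal' by blast
  qed
  have "card J = s + card J'"
    unfolding J_def using J'(1)
    by (subst card_Un_disjoint) (auto simp: card_image finite_subset)
  then show ?thesis
    using trdeg_eq_card_maximal_alg_indep_on[OF K J indep maximal]
      trdeg_eq_card_maximal_alg_indep_on[OF K J'(1,2) maximal'] by simp
qed

theorem proposition3p8:
  fixes K :: "'a::field set" and n m s :: nat and H :: "nat \<Rightarrow> 'a mpoly"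
  assumes "subfield K"
    and "poly_tuple n m H"
    and "s \<le> m"
    and "\<forall>j<s. proj_image_apex K n m H (unit_vec j)"
  shows "(\<forall>a. image_apex K n m H a \<longleftrightarrow> image_apex K n (m - s) (\<lambda>i. H (i + s)) (\<lambda>i. a (i + s)))
    \<and> (\<forall>p. (\<exists>i. s \<le> i \<and> i < m \<and> p i \<noteq> 0) \<longrightarrow>
          (proj_image_apex K n m H p \<longleftrightarrow>
           proj_image_apex K n (m - s) (\<lambda>i. H (i + s)) (\<lambda>i. p (i + s))))
    \<and> trdeg K m H = trdeg K (m - s) (\<lambda>i. H (i + s)) + s"
proof (intro conjI allI impI)
  note relations = preserves_relations_drop_unit_apices[OF assms]
  show "image_apex K n m H a \<longleftrightarrow> image_apex K n (m - s) (\<lambda>i. H (i + s)) (\<lambda>i. a (i + s))" for a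
    using relations unfolding image_apex_def preserves_relations_def by simp
  fix p :: "nat \<Rightarrow> 'a"
  assume "\<exists>i. s \<le> i \<and> i < m \<and> p i \<noteq> 0"
  then obtain i where "s \<le> i" "i < m" "p i \<noteq> 0"
    by blast
  then have "(\<exists>i<m. p i \<noteq> 0) \<and> (\<exists>i<m - s. p (i + s) \<noteq> 0)"
    using exI[of "\<lambda>i'. i' < m - s \<and> p (i' + s) \<noteq> 0" "i - s"] by auto
  then show "proj_image_apex K n m H p \<longleftrightarrow>
      proj_image_apex K n (m - s) (\<lambda>i. H (i + s)) (\<lambda>i. p (i + s))"
    using relations unfolding proj_image_apex_def preserves_relations_def by simp
next
  show "trdeg K m H = trdeg K (m - s) (\<lambda>i. H (i + s)) + s"
    by (rule trdeg_drop_unit_apices[OF assms])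
qed

end
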